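(* Let $K\ge2$, $V\ge1$, let $\phi_1,\dots,\phi_K\in\Delta_{V-1}$ have strictly positive entries, let $p=(p_v)\in\Delta_{V-1}$, and let $H(\theta)=\sum_{v=1}^Vp_v\log\big(\sum_{k=1}^K\theta_k\phi_k(v)\big)$. Assume $H$ attains its maximum over $\Delta_{K-1}$ only at a point $\theta^*$ with all coordinates strictly positive, and that $d^\top\nabla^2H(\theta^* )d<0$ for all nonzero $d\in\mathbb{R}^K$ with $\mathbf{1}_K^\top d=0$. Let $\alpha\in(0,\infty)^K$, $\widehat H(\theta)=H(\theta^* )-\mathrm{KL}(\theta^*|\theta)$, and let $\rho_n$ be the correlation of $e^{nH(\theta)}$ and $e^{n\widehat H(\theta)}$ for $\theta\sim\mathrm{Dir}_\alpha$. Then as $n\to\infty$, $$\rho_n^2\to\rho^2:=\frac{|\det Q|^{1/2}|\det R|^{1/2}}{\left|\det\!\left(\frac{Q+R}{2}\right)\right|},$$ where $Q=\nabla^2H(\theta^* )$ and $R=-\mathrm{diag}(1/\theta^*_1,\dots,1/\theta^*_K)$.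
   Context: $\Delta_{d-1}=\{x\in\mathbb{R}^d:x_i\ge0,\sum_ix_i=1\}$. $\mathrm{Dir}_\alpha$ is the Dirichlet distribution on $\Delta_{K-1}$ with density $\frac{1}{B(\alpha)}\prod_i\theta_i^{\alpha_i-1}$. $\mathrm{KL}(\theta^*|\theta)=\sum_k\theta^*_k\log(\theta^*_k/\theta_k)$, equal to $+\infty$ if some $\theta_k=0$ (with $e^{-\infty}=0$). $R$ equals minus the Hessian of $\theta\mapsto\mathrm{KL}(\theta^*|\theta)$ at $\theta^*$. $H$ is the LDA log-likelihood: $\phi_k(v)$ is the probability of word $v$ under topic $k$, $p_v$ the empirical frequency of word $v$. *)

theory Defs
  imports "HOL-Analysis.Analysis"
begin

definition prob_simplex :: "('k::finite \<Rightarrow> real) set" where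
  "prob_simplex = {x. (\<forall>i. 0 \<le> x i) \<and> (\<Sum>i\<in>UNIV. x i) = 1}"

definition mbeta :: "('k::finite \<Rightarrow> real) \<Rightarrow> real" where
  "mbeta \<alpha> = (\<Prod>i\<in>UNIV. Gamma (\<alpha> i)) / Gamma (\<Sum>i\<in>UNIV. \<alpha> i)"

text \<open>Dirichlet density on the prob_simplex (w.r.t. Lebesgue measure on the K-1 free coordinates).\<close>
definition dir_density :: "('k::finite \<Rightarrow> real) \<Rightarrow> ('k \<Rightarrow> real) \<Rightarrow> real" where
  "dir_density \<alpha> \<theta> =
     (if \<theta> \<in> prob_simplex then (\<Prod>i\<in>UNIV. \<theta> i powr (\<alpha> i - 1)) / mbeta \<alpha> else 0)"

text \<open>The distinguished coordinate eliminated via the constraint sum = 1, and the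
  map from the K-1 free coordinates to the point of the hyperplane sum = 1.\<close>
definition last_coord :: "'k" where "last_coord = (SOME k. True)"

definition lift_simplex :: "('k::finite \<Rightarrow> real) \<Rightarrow> ('k \<Rightarrow> real)" where
  "lift_simplex x = x(last_coord := 1 - (\<Sum>j\<in>UNIV - {last_coord}. x j))"

definition dir_expect :: "('k::finite \<Rightarrow> real) \<Rightarrow> (('k \<Rightarrow> real) \<Rightarrow> real) \<Rightarrow> real" where
  "dir_expect \<alpha> f =
     (\<integral>x. f (lift_simplex x) * dir_density \<alpha> (lift_simplex x)
        \<partial>(PiM (UNIV - {last_coord}) (\<lambda>_. lborel)))"

definition dir_corr :: "('k::finite \<Rightarrow> real) \<Rightarrow> (('k \<Rightarrow> real) \<Rightarrow> real) \<Rightarrow> (('k \<Rightarrow> real) \<Rightarrow> real) \<Rightarrow> real" where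
  "dir_corr \<alpha> X Y =
     (dir_expect \<alpha> (\<lambda>t. X t * Y t) - dir_expect \<alpha> X * dir_expect \<alpha> Y) /
     sqrt ((dir_expect \<alpha> (\<lambda>t. (X t)\<^sup>2) - (dir_expect \<alpha> X)\<^sup>2) *
           (dir_expect \<alpha> (\<lambda>t. (Y t)\<^sup>2) - (dir_expect \<alpha> Y)\<^sup>2))"

definition lda_H :: "('k::finite \<Rightarrow> 'v::finite \<Rightarrow> real) \<Rightarrow> ('v \<Rightarrow> real) \<Rightarrow> ('k \<Rightarrow> real) \<Rightarrow> real" where
  "lda_H \<phi> p \<theta> = (\<Sum>v\<in>UNIV. p v * ln (\<Sum>k\<in>UNIV. \<theta> k * \<phi> k v))"

text \<open>KL divergence KL(a|b) (only used where all b_k > 0).\<close>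
definition KL :: "('k::finite \<Rightarrow> real) \<Rightarrow> ('k \<Rightarrow> real) \<Rightarrow> real" where
  "KL a b = (\<Sum>k\<in>UNIV. a k * ln (a k / b k))"

text \<open>exp(n * Hhat(theta)) with Hhat(theta) = H(theta*) - KL(theta*|theta); since
  KL = +infinity when some theta_k = 0, this is 0 there (e^{-infinity} = 0).\<close>
definition exp_Hhat :: "real \<Rightarrow> real \<Rightarrow> ('k::finite \<Rightarrow> real) \<Rightarrow> ('k \<Rightarrow> real) \<Rightarrow> real" where
  "exp_Hhat n Hstar \<theta>s \<theta> =
     (if (\<forall>k. 0 < \<theta> k) then exp (n * (Hstar - KL \<theta>s \<theta>)) else 0)"

definition hessian :: "(('k \<Rightarrow> real) \<Rightarrow> real) \<Rightarrow> ('k \<Rightarrow> real) \<Rightarrow> 'k \<Rightarrow> 'k \<Rightarrow> real" where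
  "hessian f x i j =
     deriv (\<lambda>t. deriv (\<lambda>s. f (\<lambda>l. x l + s * (if l = i then 1 else 0)
                                       + t * (if l = j then 1 else 0))) 0) 0"

end

theory Submission
  imports Defs "HOL-Probability.Probability" "HOL-Real_Asymp.Real_Asymp"
begin

text \<open>In coordinates \<open>y = \<surd>n (\<theta> - \<theta>s)\<close> on the simplex, \<open>exp (n (H \<theta> - H \<theta>s))\<close> and
  \<open>exp (- n KL(\<theta>s|\<theta>))\<close> converge to Gaussians whose quadratic forms are the restrictions
  \<open>Q'\<close>, \<open>R'\<close> of \<open>-Q\<close>, \<open>-R\<close> to the hyperplane \<open>\<Sum> y = 0\<close>. By Laplace's method every mixed moment
  \<open>E[X^a Y^b]\<close> is asymptotic to \<open>exp (n (a + b) H \<theta>s) Dir(\<theta>s) (2\<pi>/n)^((K-1)/2) / \<surd>det (a Q' + b R')\<close>,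
  so in the correlation all prefactors cancel and the product of the first moments is of
  lower order. Dominated convergence is justified by global Gaussian bounds coming from
  \<open>ln (1 + u) - u \<le> - u\<^sup>2 / (2 (1 + U))\<close> for \<open>-1 < u \<le> U\<close>. Finally, first-order optimality gives
  \<open>-Q \<theta>s = -R \<theta>s = \<one>\<close>, so the direction \<open>\<theta>s\<close> splits off and the determinants of
  \<open>Q'\<close>, \<open>R'\<close> and \<open>Q' + R'\<close> are those of the full \<open>K \<times> K\<close> matrices up to explicit factors.\<close>

section \<open>Gaussian integrals over finite products of lines\<close>

lemma nn_integral_exp_neg_square:
  fixes a m :: real
  assumes a: "0 < a"
  shows "(\<integral>\<^sup>+t. ennreal (exp (- a * (t - m)\<^sup>2 / 2)) \<partial>lborel) = ennreal (sqrt (2 * pi / a))"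
proof -
  define C where "C = sqrt (2 * pi / a)"
  have "exp (- a * (t - m)\<^sup>2 / 2) = C * normal_density m (1 / sqrt a) t" for t
    using a by (simp add: C_def normal_density_def power_divide real_sqrt_divide field_simps)
  then have "(\<integral>\<^sup>+t. ennreal (exp (- a * (t - m)\<^sup>2 / 2)) \<partial>lborel)
      = (\<integral>\<^sup>+t. ennreal C * ennreal (normal_density m (1 / sqrt a) t) \<partial>lborel)"
    using a by (intro nn_integral_cong) (simp add: C_def ennreal_mult[symmetric])
  also have "\<dots> = ennreal C * (\<integral>\<^sup>+t. ennreal (normal_density m (1 / sqrt a) t) \<partial>lborel)"
    by (rule nn_integral_cmult) simp
  also have "(\<integral>\<^sup>+t. ennreal (normal_density m (1 / sqrt a) t) \<partial>lborel) = 1"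
    using a by (subst nn_integral_eq_integral) auto
  finally show ?thesis by (simp add: C_def)
qed

definition quad_form :: "'i set \<Rightarrow> ('i \<Rightarrow> 'i \<Rightarrow> real) \<Rightarrow> ('i \<Rightarrow> real) \<Rightarrow> real" where
  "quad_form J A y = (\<Sum>i\<in>J. \<Sum>j\<in>J. y i * A i j * y j)"

definition pos_def_on :: "'i set \<Rightarrow> ('i \<Rightarrow> 'i \<Rightarrow> real) \<Rightarrow> bool" where
  "pos_def_on J A \<longleftrightarrow>
     (\<forall>i\<in>J. \<forall>j\<in>J. A i j = A j i) \<and> (\<forall>y. (\<exists>i\<in>J. y i \<noteq> 0) \<longrightarrow> 0 < quad_form J A y)"

definition mat_on :: "'k::finite set \<Rightarrow> ('k \<Rightarrow> 'k \<Rightarrow> real) \<Rightarrow> real^'k^'k" where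
  "mat_on J A = (\<chi> i j. if i \<in> J \<and> j \<in> J then A i j else if i = j then 1 else 0)"

definition det_on :: "'k::finite set \<Rightarrow> ('k \<Rightarrow> 'k \<Rightarrow> real) \<Rightarrow> real" where
  "det_on J A = det (mat_on J A)"

definition schur_complement :: "('i \<Rightarrow> 'i \<Rightarrow> real) \<Rightarrow> 'i \<Rightarrow> 'i \<Rightarrow> 'i \<Rightarrow> real" where
  "schur_complement A a i j = A i j - A i a * A a j / A a a"

lemma pos_def_on_sym: "pos_def_on J A \<Longrightarrow> i \<in> J \<Longrightarrow> j \<in> J \<Longrightarrow> A i j = A j i"
  by (simp add: pos_def_on_def)

lemma pos_def_on_pos: "pos_def_on J A \<Longrightarrow> i \<in> J \<Longrightarrow> y i \<noteq> 0 \<Longrightarrow> 0 < quad_form J A y"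
  unfolding pos_def_on_def by blast

lemma measurable_quad_form[measurable]:
  "finite J \<Longrightarrow> quad_form J A \<in> borel_measurable (PiM J (\<lambda>_. lborel))"
  unfolding quad_form_def[abs_def] by measurable

lemma quad_form_add: "quad_form J (\<lambda>i j. A i j + B i j) y = quad_form J A y + quad_form J B y"
  unfolding quad_form_def by (simp add: distrib_left distrib_right sum.distrib)

lemma quad_form_cmult: "quad_form J (\<lambda>i j. c * A i j) y = c * quad_form J A y"
  unfolding quad_form_def by (simp add: sum_distrib_left mult_ac)

lemma pos_def_on_add: "pos_def_on J A \<Longrightarrow> pos_def_on J B \<Longrightarrow> pos_def_on J (\<lambda>i j. A i j + B i j)"
  unfolding pos_def_on_def by (auto simp: quad_form_add add_pos_pos)

lemma quad_form_unit:
  assumes "a \<in> J" "finite J"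
  shows "quad_form J A (\<lambda>i. if i = a then 1 else 0) = A a a"
proof -
  have "(\<Sum>j\<in>J. (if i = a then 1 else 0) * A i j * (if j = a then 1 else 0))
      = (if i = a then A a a else 0)" for i
    using assms by (cases "i = a") (simp_all add: if_distrib[of "\<lambda>t. _ * t"] sum.delta cong: if_cong)
  then show ?thesis unfolding quad_form_def using assms by (simp add: sum.delta)
qed

lemma quad_form_insert_schur:
  assumes a: "a \<notin> F" and fin: "finite F" and sym: "\<And>j. j \<in> F \<Longrightarrow> A j a = A a j"
    and Aaa: "A a a \<noteq> 0"
  shows "quad_form (insert a F) A (x(a := t))
           = A a a * (t + (\<Sum>j\<in>F. A a j * x j) / A a a)\<^sup>2 + quad_form F (schur_complement A a) x"
proof -
  define b where "b = (\<Sum>j\<in>F. A a j * x j)"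
  have ne: "(j = a) = False" "(a = j) = False" if "j \<in> F" for j using a that by auto
  have "quad_form (insert a F) A (x(a := t))
      = t * A a a * t + (\<Sum>j\<in>F. t * A a j * x j) + (\<Sum>i\<in>F. x i * A i a * t) + quad_form F A x"
    unfolding quad_form_def using a fin by (simp add: ne sum.distrib cong: sum.cong)
  also have "(\<Sum>i\<in>F. x i * A i a * t) = t * b"
    unfolding b_def by (simp add: sum_distrib_left sym mult_ac cong: sum.cong)
  also have "(\<Sum>j\<in>F. t * A a j * x j) = t * b"
    unfolding b_def by (simp add: sum_distrib_left mult_ac)
  also have "quad_form F A x = quad_form F (schur_complement A a) x + b\<^sup>2 / A a a"
  proof -
    have "b\<^sup>2 = (\<Sum>i\<in>F. \<Sum>j\<in>F. x i * (A i a * A a j) * x j)"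
      unfolding b_def power2_eq_square sum_product by (intro sum.cong refl) (simp add: sym mult_ac)
    then show ?thesis
      unfolding quad_form_def schur_complement_def
      by (simp add: sum_divide_distrib right_diff_distrib left_diff_distrib sum_subtractf)
  qed
  also have "t * A a a * t + t * b + t * b + (quad_form F (schur_complement A a) x + b\<^sup>2 / A a a)
      = A a a * (t + b / A a a)\<^sup>2 + quad_form F (schur_complement A a) x"
    using Aaa by (simp add: power2_eq_square field_simps)
  finally show ?thesis unfolding b_def .
qed

lemma pos_def_on_insertD:
  assumes pd: "pos_def_on (insert a F) A" and a: "a \<notin> F" and fin: "finite F"
  shows "0 < A a a" and "pos_def_on F (schur_complement A a)"
proof -
  note sym = pos_def_on_sym[OF pd]
  show Aaa: "0 < A a a"
    using pos_def_on_pos[OF pd, of a "\<lambda>i. if i = a then 1 else 0"] quad_form_unit[of a "insert a F" A] fin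
    by simp
  show "pos_def_on F (schur_complement A a)"
    unfolding pos_def_on_def
  proof safe
    fix i j assume "i \<in> F" "j \<in> F"
    then show "schur_complement A a i j = schur_complement A a j i"
      unfolding schur_complement_def using sym[of i j] sym[of i a] sym[of j a] by auto
  next
    fix y :: "_ \<Rightarrow> real" and i assume i: "i \<in> F" "y i \<noteq> 0"
    define t where "t = - (\<Sum>j\<in>F. A a j * y j) / A a a"
    have "0 < quad_form (insert a F) A (y(a := t))"
      using i a by (intro pos_def_on_pos[OF pd, of i]) auto
    also have "\<dots> = quad_form F (schur_complement A a) y"
      using sym Aaa by (subst quad_form_insert_schur[OF a fin]) (auto simp: t_def)
    finally show "0 < quad_form F (schur_complement A a) y" .
  qed
qed

lemma det_scale_rows:
  fixes A :: "real^'n^'n"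
  shows "det (\<chi> i j. d i * A $ i $ j) = (\<Prod>i\<in>UNIV. d i) * det A"
proof -
  have "(\<chi> i j. d i * A $ i $ j) = (\<chi> i j. if i = j then d i else 0) ** A"
    by (simp add: vec_eq_iff matrix_matrix_mult_def if_distrib[of "\<lambda>t. t * _"] sum.delta cong: if_cong)
  then show ?thesis by (simp add: det_mul det_diagonal)
qed

lemma det_on_empty: "det_on {} A = 1"
proof -
  have "mat_on {} A = mat 1" by (simp add: mat_on_def mat_def vec_eq_iff)
  then show ?thesis by (simp add: det_on_def)
qed

lemma det_on_cmult: "det_on J (\<lambda>i j. c * A i j) = c ^ card J * det_on J A"
proof -
  have "mat_on J (\<lambda>i j. c * A i j) = (\<chi> i j. (if i \<in> J then c else 1) * mat_on J A $ i $ j)"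
    by (simp add: mat_on_def vec_eq_iff)
  moreover have "(\<Prod>i\<in>UNIV. if i \<in> J then c else 1) = c ^ card J"
    by (simp add: prod.If_cases)
  ultimately show ?thesis unfolding det_on_def by (simp add: det_scale_rows)
qed

lemma det_shear:
  fixes w :: "'k::finite \<Rightarrow> real"
  assumes "w a = 0"
  shows "det (\<chi> i j. (if i = j then 1 else 0) - (if i = a then w j else 0) :: real^'k^'k) = 1"
proof -
  define x :: "real^'k" where "x = - (\<Sum>j\<in>UNIV - {a}. w j *s row j (mat 1))"
  have x: "x \<in> vec.span {row j (mat 1 :: real^'k^'k) |j. j \<noteq> a}"
    unfolding x_def by (intro vec.span_neg vec.span_sum vec.span_scale vec.span_base) auto
  have "x $ j = - w j" for j
    using assms by (cases "j = a") (auto simp: x_def row_def mat_def sum_negf if_distrib[of "\<lambda>t. _ * t"] cong: if_cong)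
  then have "(\<chi> i j. (if i = j then 1 else 0) - (if i = a then w j else 0) :: real^'k^'k)
      = (\<chi> k. if k = a then row a (mat 1) + x else row k (mat 1))"
    by (auto simp: vec_eq_iff row_def mat_def)
  then show ?thesis using det_row_span[OF x] by simp
qed

text \<open>Congruence by a shear of determinant 1 eliminates row and column \<open>a\<close> outside the pivot.\<close>
lemma det_on_insert:
  fixes A :: "'k::finite \<Rightarrow> 'k \<Rightarrow> real"
  assumes a: "a \<notin> J" and sym: "\<And>i j. i \<in> insert a J \<Longrightarrow> j \<in> insert a J \<Longrightarrow> A i j = A j i"
    and Aaa: "A a a \<noteq> 0"
  shows "det_on (insert a J) A = A a a * det_on J (schur_complement A a)"
proof -
  define M where "M = mat_on (insert a J) A"
  define N where "N = mat_on J (schur_complement A a)"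
  define w where "w = (\<lambda>j. if j \<in> J then A a j / A a a else 0)"
  define E :: "real^'k^'k" where "E = (\<chi> i j. (if i = j then 1 else 0) - (if i = a then w j else 0))"
  have detE: "det E = 1" unfolding E_def by (rule det_shear) (simp add: w_def a)
  have ME: "(M ** E) $ k $ j = M $ k $ j - M $ k $ a * w j" for k j
    unfolding matrix_matrix_mult_def E_def
    by (simp add: right_diff_distrib sum_subtractf if_distrib[of "\<lambda>t. _ * t"] sum.delta cong: if_cong)
  have EtP: "(transpose E ** P) $ i $ j = P $ i $ j - w i * P $ a $ j" for i j and P :: "real^'k^'k"
    unfolding matrix_matrix_mult_def E_def transpose_def
    by (simp add: left_diff_distrib sum_subtractf if_distrib[of "\<lambda>t. t * _"] sum.delta cong: if_cong)
  have entry: "(transpose E ** (M ** E)) $ i $ j = (if i = a then A a a * N $ a $ j else N $ i $ j)" for i j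
  proof -
    consider "i = a" | "i \<in> J" | "i \<notin> insert a J" by auto
    then show ?thesis
    proof cases
      case 1
      then show ?thesis unfolding EtP ME using a Aaa
        by (cases "j \<in> J") (auto simp: M_def N_def mat_on_def w_def)
    next
      case 2
      then have "i \<noteq> a" "A i a = A a i" using a sym[of i a] by auto
      with 2 show ?thesis unfolding EtP ME using a Aaa
        by (cases "j \<in> J") (auto simp: M_def N_def mat_on_def w_def schur_complement_def field_simps)
    next
      case 3
      then show ?thesis unfolding EtP ME using a by (auto simp: M_def N_def mat_on_def w_def)
    qed
  qed
  have "det M = det (transpose E ** (M ** E))" by (simp add: det_mul detE)
  also have "transpose E ** (M ** E) = (\<chi> i. if i = a then A a a *s row a N else row i N)"
    using entry by (simp add: vec_eq_iff row_def)
  also have "det \<dots> = A a a * det (\<chi> i. if i = a then row a N else row i N)"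
    by (rule det_row_mul)
  also have "(\<chi> i. if i = a then row a N else row i N) = N"
    by (simp add: vec_eq_iff row_def)
  finally show ?thesis unfolding det_on_def M_def N_def .
qed

lemma nn_integral_gaussian_insert:
  assumes a: "a \<notin> F" and fin: "finite F" and pd: "pos_def_on (insert a F) A"
  shows "(\<integral>\<^sup>+t. ennreal (exp (- quad_form (insert a F) A (x(a := t)) / 2)) \<partial>lborel)
           = ennreal (sqrt (2 * pi / A a a)) * ennreal (exp (- quad_form F (schur_complement A a) x / 2))"
proof -
  have Aaa: "0 < A a a" by (rule pos_def_on_insertD(1)[OF pd a fin])
  have sym: "A j a = A a j" if "j \<in> F" for j using pos_def_on_sym[OF pd] that by blast
  define m where "m = - (\<Sum>j\<in>F. A a j * x j) / A a a"
  have split: "exp (- quad_form (insert a F) A (x(a := t)) / 2)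
      = exp (- quad_form F (schur_complement A a) x / 2) * exp (- A a a * (t - m)\<^sup>2 / 2)" for t
  proof -
    have "quad_form (insert a F) A (x(a := t)) = A a a * (t - m)\<^sup>2 + quad_form F (schur_complement A a) x"
      using Aaa by (subst quad_form_insert_schur[where A = A and x = x, OF a fin sym]) (auto simp: m_def)
    then show ?thesis by (simp add: exp_add[symmetric] add_divide_distrib)
  qed
  have "(\<integral>\<^sup>+t. ennreal (exp (- quad_form (insert a F) A (x(a := t)) / 2)) \<partial>lborel)
      = (\<integral>\<^sup>+t. ennreal (exp (- quad_form F (schur_complement A a) x / 2))
                * ennreal (exp (- A a a * (t - m)\<^sup>2 / 2)) \<partial>lborel)"
    unfolding split by (simp add: ennreal_mult)
  also have "\<dots> = ennreal (exp (- quad_form F (schur_complement A a) x / 2))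
                   * (\<integral>\<^sup>+t. ennreal (exp (- A a a * (t - m)\<^sup>2 / 2)) \<partial>lborel)"
    by (rule nn_integral_cmult) simp
  also have "\<dots> = ennreal (exp (- quad_form F (schur_complement A a) x / 2)) * ennreal (sqrt (2 * pi / A a a))"
    by (simp only: nn_integral_exp_neg_square[OF Aaa])
  finally show ?thesis by (simp only: mult.commute)
qed

lemma nn_integral_gaussian_PiM:
  fixes J :: "'k::finite set" and A :: "'k \<Rightarrow> 'k \<Rightarrow> real"
  assumes "pos_def_on J A"
  shows "(\<integral>\<^sup>+y. ennreal (exp (- quad_form J A y / 2)) \<partial>PiM J (\<lambda>_. lborel))
           = ennreal ((2 * pi) powr (card J / 2) / sqrt (det_on J A)) \<and> 0 < det_on J A"
proof -
  have "finite J" by simp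
  then show ?thesis using assms
  proof (induction J arbitrary: A rule: finite_induct)
    case empty
    show ?case by (simp add: PiM_empty nn_integral_count_space_finite det_on_empty quad_form_def)
  next
    case (insert a F A)
    interpret product_sigma_finite "\<lambda>_. lborel" by standard
    note Aaa = pos_def_on_insertD(1)[OF insert.prems insert.hyps(2,1)]
    note IH = insert.IH[OF pos_def_on_insertD(2)[OF insert.prems insert.hyps(2,1)]]
    note sym = pos_def_on_sym[OF insert.prems]
    have det: "det_on (insert a F) A = A a a * det_on F (schur_complement A a)"
      using Aaa by (intro det_on_insert[OF insert.hyps(2) sym]) auto
    have "(\<integral>\<^sup>+y. ennreal (exp (- quad_form (insert a F) A y / 2)) \<partial>PiM (insert a F) (\<lambda>_. lborel))
        = (\<integral>\<^sup>+x. (\<integral>\<^sup>+t. ennreal (exp (- quad_form (insert a F) A (x(a := t)) / 2)) \<partial>lborel)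
             \<partial>PiM F (\<lambda>_. lborel))"
      using insert.hyps by (subst product_nn_integral_insert) auto
    also have "\<dots> = (\<integral>\<^sup>+x. ennreal (sqrt (2 * pi / A a a))
                        * ennreal (exp (- quad_form F (schur_complement A a) x / 2)) \<partial>PiM F (\<lambda>_. lborel))"
      using insert by (intro nn_integral_cong nn_integral_gaussian_insert) auto
    also have "\<dots> = ennreal (sqrt (2 * pi / A a a))
        * (\<integral>\<^sup>+x. ennreal (exp (- quad_form F (schur_complement A a) x / 2)) \<partial>PiM F (\<lambda>_. lborel))"
      using insert.hyps by (intro nn_integral_cmult) auto
    also have "\<dots> = ennreal (sqrt (2 * pi / A a a) * ((2 * pi) powr (card F / 2)
                                                      / sqrt (det_on F (schur_complement A a))))"
      using IH Aaa by (simp add: ennreal_mult[symmetric])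
    also have "sqrt (2 * pi / A a a) * ((2 * pi) powr (card F / 2) / sqrt (det_on F (schur_complement A a)))
        = (2 * pi) powr (card (insert a F) / 2) / sqrt (det_on (insert a F) A)"
    proof -
      have "(2 * pi) powr (card (insert a F) / 2) = (2 * pi) powr (1 / 2) * (2 * pi) powr (card F / 2)"
        using insert.hyps by (simp add: powr_add[symmetric] add_divide_distrib)
      then show ?thesis
        unfolding det using Aaa IH by (simp add: powr_half_sqrt real_sqrt_mult real_sqrt_divide field_simps)
    qed
    finally show ?case using det Aaa IH by simp
  qed
qed

lemma
  fixes J :: "'k::finite set"
  assumes "pos_def_on J A"
  shows integral_gaussian_PiM:
      "(\<integral>y. exp (- quad_form J A y / 2) \<partial>PiM J (\<lambda>_. lborel)) = (2 * pi) powr (card J / 2) / sqrt (det_on J A)"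
    and det_on_pos: "0 < det_on J A"
  using nn_integral_gaussian_PiM[OF assms] by (simp_all add: integral_eq_nn_integral)

section \<open>Laplace's method\<close>

lemma nn_integral_fun_upd_affine:
  assumes a: "a \<notin> F" and x: "x \<in> space (PiM F (\<lambda>_. lborel))" and r: "0 < r"
    and f: "f \<in> borel_measurable (PiM (insert a F) (\<lambda>_. lborel))"
  shows "(\<integral>\<^sup>+t. f (x(a := t)) \<partial>lborel) = ennreal r * (\<integral>\<^sup>+t. f (x(a := c + r * t)) \<partial>lborel)"
proof -
  have "(\<lambda>t. f (x(a := t))) \<in> borel_measurable lborel"
    by (rule measurable_compose[OF measurable_component_update[OF x a] f])
  then have "(\<lambda>t. f (x(a := t))) \<in> borel_measurable borel" by simp
  then show ?thesis using nn_integral_real_affine[of "\<lambda>t. f (x(a := t))" r c] r by simp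
qed

lemma nn_integral_PiM_affine:
  fixes J :: "'i set" and f :: "('i \<Rightarrow> real) \<Rightarrow> ennreal"
  assumes fin: "finite J" and r: "0 < r" and f: "f \<in> borel_measurable (PiM J (\<lambda>_. lborel))"
  shows "(\<integral>\<^sup>+x. f x \<partial>PiM J (\<lambda>_. lborel))
           = ennreal (r ^ card J) * (\<integral>\<^sup>+y. f (\<lambda>j\<in>J. c j + r * y j) \<partial>PiM J (\<lambda>_. lborel))"
  using fin f
proof (induction J arbitrary: f rule: finite_induct)
  case empty
  have "(\<lambda>j\<in>{}. c j + r * y j) = (\<lambda>_. undefined)" for y :: "'i \<Rightarrow> real" by auto
  then show ?case by (simp add: PiM_empty nn_integral_count_space_finite)
next
  case (insert a F f)
  interpret product_sigma_finite "\<lambda>_. lborel" by standard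
  note f[measurable] = insert.prems
  define g where "g = (\<lambda>x. \<integral>\<^sup>+t. f (x(a := c a + r * t)) \<partial>lborel)"
  have g_meas[measurable]: "g \<in> borel_measurable (PiM F (\<lambda>_. lborel))"
    unfolding g_def using insert.hyps by measurable
  have "(\<integral>\<^sup>+x. f x \<partial>PiM (insert a F) (\<lambda>_. lborel))
      = (\<integral>\<^sup>+x. (\<integral>\<^sup>+t. f (x(a := t)) \<partial>lborel) \<partial>PiM F (\<lambda>_. lborel))"
    using insert.hyps by (subst product_nn_integral_insert) auto
  also have "\<dots> = (\<integral>\<^sup>+x. ennreal r * g x \<partial>PiM F (\<lambda>_. lborel))"
    unfolding g_def using insert.hyps r
    by (intro nn_integral_cong nn_integral_fun_upd_affine) auto
  also have "\<dots> = ennreal r * (\<integral>\<^sup>+x. g x \<partial>PiM F (\<lambda>_. lborel))"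
    by (rule nn_integral_cmult) simp
  also have "(\<integral>\<^sup>+x. g x \<partial>PiM F (\<lambda>_. lborel))
      = ennreal (r ^ card F) * (\<integral>\<^sup>+y. g (\<lambda>j\<in>F. c j + r * y j) \<partial>PiM F (\<lambda>_. lborel))"
    by (rule insert.IH) simp
  also have "(\<integral>\<^sup>+y. g (\<lambda>j\<in>F. c j + r * y j) \<partial>PiM F (\<lambda>_. lborel))
      = (\<integral>\<^sup>+y. f (\<lambda>j\<in>insert a F. c j + r * y j) \<partial>PiM (insert a F) (\<lambda>_. lborel))"
  proof -
    have "(\<lambda>j\<in>insert a F. c j + r * (y(a := t)) j) = (\<lambda>j\<in>F. c j + r * y j)(a := c a + r * t)" for y t
      using insert.hyps by (auto simp: fun_eq_iff)
    then show ?thesis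
      using insert.hyps by (subst product_nn_integral_insert) (auto simp: g_def)
  qed
  finally have "(\<integral>\<^sup>+x. f x \<partial>PiM (insert a F) (\<lambda>_. lborel))
      = (ennreal r * ennreal (r ^ card F))
        * (\<integral>\<^sup>+y. f (\<lambda>j\<in>insert a F. c j + r * y j) \<partial>PiM (insert a F) (\<lambda>_. lborel))"
    by (simp add: mult.assoc)
  also have "ennreal r * ennreal (r ^ card F) = ennreal (r ^ card (insert a F))"
    using insert.hyps r by (simp add: ennreal_mult[symmetric])
  finally show ?case .
qed

lemma integral_PiM_affine:
  fixes J :: "'i set" and g :: "('i \<Rightarrow> real) \<Rightarrow> real"
  assumes fin: "finite J" and r: "0 < r" and g[measurable]: "g \<in> borel_measurable (PiM J (\<lambda>_. lborel))"
    and nonneg: "\<And>x. 0 \<le> g x"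
  shows "(\<integral>x. g x \<partial>PiM J (\<lambda>_. lborel)) = r ^ card J * (\<integral>y. g (\<lambda>j\<in>J. c j + r * y j) \<partial>PiM J (\<lambda>_. lborel))"
proof -
  have "(\<integral>\<^sup>+x. ennreal (g x) \<partial>PiM J (\<lambda>_. lborel))
      = ennreal (r ^ card J) * (\<integral>\<^sup>+y. ennreal (g (\<lambda>j\<in>J. c j + r * y j)) \<partial>PiM J (\<lambda>_. lborel))"
    by (rule nn_integral_PiM_affine[OF fin r]) measurable
  then show ?thesis
    using nonneg r by (simp add: integral_eq_nn_integral enn2real_mult)
qed

lemma integrable_exp_neg_sum_squares_PiM:
  fixes J :: "'i set"
  assumes fin: "finite J" and c: "0 < c"
  shows "integrable (PiM J (\<lambda>_. lborel)) (\<lambda>y::'i \<Rightarrow> real. exp (- c * (\<Sum>j\<in>J. (y j)\<^sup>2)))"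
proof -
  interpret product_sigma_finite "\<lambda>_. lborel" by standard
  have "(\<integral>\<^sup>+t. ennreal (exp (- c * t\<^sup>2)) \<partial>lborel) < \<infinity>"
    using nn_integral_exp_neg_square[of "2 * c" 0] c by simp
  then have "integrable lborel (\<lambda>t. exp (- c * t\<^sup>2))"
    by (intro integrableI_nonneg) auto
  then have "integrable (PiM J (\<lambda>_. lborel)) (\<lambda>y. \<Prod>j\<in>J. exp (- c * (y j)\<^sup>2))"
    using fin by (intro product_integrable_prod) auto
  moreover have "(\<Prod>j\<in>J. exp (- c * (y j)\<^sup>2)) = exp (- c * (\<Sum>j\<in>J. (y j)\<^sup>2))" for y
    using fin by (simp add: exp_sum sum_distrib_left)
  ultimately show ?thesis by simp
qed

text \<open>The integral of \<open>E\<^sup>n w\<close> concentrates at \<open>x0\<close> at scale \<open>1/\<surd>n\<close>; the global Gaussian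
  bound on \<open>E\<close> both kills the contribution away from \<open>x0\<close> and dominates the rescaled integrand
  near \<open>x0\<close>.\<close>
locale laplace_method =
  fixes J :: "'i set" and x0 :: "'i \<Rightarrow> real" and w E q :: "('i \<Rightarrow> real) \<Rightarrow> real"
    and c \<delta> W w0 :: real
  assumes finite_J: "finite J"
    and measurable_w [measurable]: "w \<in> borel_measurable (PiM J (\<lambda>_. lborel))"
    and measurable_E [measurable]: "E \<in> borel_measurable (PiM J (\<lambda>_. lborel))"
    and measurable_q [measurable]: "q \<in> borel_measurable (PiM J (\<lambda>_. lborel))"
    and w_nonneg: "\<And>x. 0 \<le> w x"
    and integrable_w: "integrable (PiM J (\<lambda>_. lborel)) w"
    and E_nonneg: "\<And>x. 0 \<le> E x"
    and c_pos: "0 < c"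
    and E_le_gaussian: "\<And>x. w x \<noteq> 0 \<Longrightarrow> E x \<le> exp (- c * (\<Sum>j\<in>J. (x j - x0 j)\<^sup>2))"
    and \<delta>_pos: "0 < \<delta>"
    and w_bounded_near: "\<And>x. (\<Sum>j\<in>J. (x j - x0 j)\<^sup>2) < \<delta> \<Longrightarrow> w x \<le> W"
    and pointwise_limit: "\<And>y. (\<lambda>n. E (\<lambda>j\<in>J. x0 j + y j / sqrt n) ^ n * w (\<lambda>j\<in>J. x0 j + y j / sqrt n))
                                \<longlonglongrightarrow> exp (- q y / 2) * w0"
begin

abbreviation M :: "('i \<Rightarrow> real) measure" where "M \<equiv> PiM J (\<lambda>_. lborel)"

lemma E_power_le:
  assumes "w x \<noteq> 0"
  shows "E x ^ n \<le> exp (- c * n * (\<Sum>j\<in>J. (x j - x0 j)\<^sup>2))"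
proof -
  have "E x ^ n \<le> exp (- c * (\<Sum>j\<in>J. (x j - x0 j)\<^sup>2)) ^ n"
    using E_le_gaussian[OF assms] E_nonneg by (intro power_mono) auto
  then show ?thesis by (simp add: exp_of_nat_mult[symmetric] mult_ac)
qed

lemma E_power_w_le: "E x ^ n * w x \<le> w x"
proof (cases "w x = 0")
  case False
  have "0 \<le> c * n * (\<Sum>j\<in>J. (x j - x0 j)\<^sup>2)"
    using c_pos by (simp add: sum_nonneg)
  then have "exp (- c * n * (\<Sum>j\<in>J. (x j - x0 j)\<^sup>2)) \<le> 1" by simp
  then have "E x ^ n \<le> 1"
    using E_power_le[OF False, of n] by linarith
  then show ?thesis using w_nonneg[of x] by (simp add: mult_left_le_one_le E_nonneg)
qed simp

lemma integrable_restricted_power: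
  assumes [measurable]: "Measurable.pred M P"
  shows "integrable M (\<lambda>x. if P x then E x ^ n * w x else 0)"
  by (rule Bochner_Integration.integrable_bound[OF integrable_w])
     (use E_power_w_le w_nonneg E_nonneg in \<open>auto intro!: AE_I2 simp: zero_le_power\<close>)

lemma far_part:
  "(\<lambda>n. sqrt n ^ card J * (\<integral>x. (if \<delta> \<le> (\<Sum>j\<in>J. (x j - x0 j)\<^sup>2) then E x ^ n * w x else 0) \<partial>M))
     \<longlonglongrightarrow> 0"
proof (rule tendsto_sandwich)
  let ?far = "\<lambda>n x. if \<delta> \<le> (\<Sum>j\<in>J. (x j - x0 j)\<^sup>2) then E x ^ n * w x else 0"
  have far_le: "(\<integral>x. ?far n x \<partial>M) \<le> exp (- c * \<delta> * n) * (\<integral>x. w x \<partial>M)" for n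
  proof -
    have "(\<integral>x. ?far n x \<partial>M) \<le> (\<integral>x. exp (- c * \<delta> * n) * w x \<partial>M)"
    proof (rule integral_mono[OF integrable_restricted_power], measurable)
      show "integrable M (\<lambda>x. exp (- c * \<delta> * n) * w x)" using integrable_w by simp
      fix x
      show "?far n x \<le> exp (- c * \<delta> * n) * w x"
      proof (cases "\<delta> \<le> (\<Sum>j\<in>J. (x j - x0 j)\<^sup>2) \<and> w x \<noteq> 0")
        case True
        have "\<delta> * n \<le> (\<Sum>j\<in>J. (x j - x0 j)\<^sup>2) * n"
          using True by (intro mult_right_mono) auto
        then have "c * \<delta> * n \<le> c * n * (\<Sum>j\<in>J. (x j - x0 j)\<^sup>2)"
          using c_pos mult_left_mono[of "\<delta> * n" _ c] by (simp add: mult_ac)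
        then have "E x ^ n \<le> exp (- c * \<delta> * n)"
          using E_power_le[of x n] True by (auto elim!: order_trans)
        then show ?thesis using True w_nonneg[of x] by (auto intro: mult_right_mono)
      qed (use w_nonneg in auto)
    qed
    then show ?thesis by simp
  qed
  show "\<forall>\<^sub>F n in sequentially. 0 \<le> sqrt n ^ card J * (\<integral>x. ?far n x \<partial>M)"
    by (intro always_eventually allI mult_nonneg_nonneg Bochner_Integration.integral_nonneg)
       (auto simp: w_nonneg E_nonneg)
  show "\<forall>\<^sub>F n in sequentially. sqrt n ^ card J * (\<integral>x. ?far n x \<partial>M)
                               \<le> (sqrt n ^ card J * exp (- c * \<delta> * n)) * (\<integral>x. w x \<partial>M)"
    using far_le by (auto intro!: always_eventually mult_left_mono simp: mult.assoc)
  have "(\<lambda>n::nat. sqrt n ^ card J * exp (- c * \<delta> * n)) \<longlonglongrightarrow> 0"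
    using c_pos \<delta>_pos by real_asymp
  then show "(\<lambda>n. (sqrt n ^ card J * exp (- c * \<delta> * n)) * (\<integral>x. w x \<partial>M)) \<longlonglongrightarrow> 0"
    by (rule tendsto_mult_left_zero)
qed simp

definition shift :: "nat \<Rightarrow> ('i \<Rightarrow> real) \<Rightarrow> 'i \<Rightarrow> real" where
  "shift n y = (\<lambda>j\<in>J. x0 j + y j / sqrt n)"

definition near :: "nat \<Rightarrow> ('i \<Rightarrow> real) \<Rightarrow> real" where
  "near n x = (if (\<Sum>j\<in>J. (x j - x0 j)\<^sup>2) < \<delta> then E x ^ n * w x else 0)"

lemma measurable_near [measurable]: "near n \<in> borel_measurable M"
  unfolding near_def[abs_def] using finite_J by measurable

lemma measurable_shift [measurable]: "shift n \<in> M \<rightarrow>\<^sub>M M"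
  unfolding shift_def using finite_J by measurable

lemma sum_squares_shift:
  "0 < n \<Longrightarrow> (\<Sum>j\<in>J. (shift n y j - x0 j)\<^sup>2) = (\<Sum>j\<in>J. (y j)\<^sup>2) / n"
  unfolding shift_def by (simp add: sum_divide_distrib power_divide)

lemma near_rescaled:
  assumes "0 < n"
  shows "sqrt n ^ card J * (\<integral>x. near n x \<partial>M) = (\<integral>y. near n (shift n y) \<partial>M)"
proof -
  have "shift n = (\<lambda>y. \<lambda>j\<in>J. x0 j + (1 / sqrt n) * y j)"
    by (simp add: shift_def fun_eq_iff)
  then have "(\<integral>x. near n x \<partial>M) = (1 / sqrt n) ^ card J * (\<integral>y. near n (shift n y) \<partial>M)"
    using assms by (simp only:) (rule integral_PiM_affine[OF finite_J], auto simp: near_def w_nonneg E_nonneg)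
  then show ?thesis using assms by (simp add: power_one_over)
qed

lemma near_shift_le:
  assumes "0 < n"
  shows "norm (near n (shift n y)) \<le> max W 0 * exp (- c * (\<Sum>j\<in>J. (y j)\<^sup>2))"
proof (cases "(\<Sum>j\<in>J. (shift n y j - x0 j)\<^sup>2) < \<delta> \<and> w (shift n y) \<noteq> 0")
  case True
  have "E (shift n y) ^ n \<le> exp (- c * n * ((\<Sum>j\<in>J. (y j)\<^sup>2) / n))"
    using E_power_le[of "shift n y" n] True sum_squares_shift[OF assms] by simp
  also have "\<dots> = exp (- c * (\<Sum>j\<in>J. (y j)\<^sup>2))" using assms by simp
  finally have "E (shift n y) ^ n * w (shift n y) \<le> exp (- c * (\<Sum>j\<in>J. (y j)\<^sup>2)) * max W 0"
    using w_bounded_near[of "shift n y"] True w_nonneg by (intro mult_mono) auto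
  then show ?thesis using True E_nonneg w_nonneg by (simp add: near_def mult.commute)
qed (auto simp: near_def)

lemma near_shift_limit:
  "(\<lambda>n. \<integral>y. near (Suc n) (shift (Suc n) y) \<partial>M) \<longlonglongrightarrow> (\<integral>y. exp (- q y / 2) * w0 \<partial>M)"
proof (rule integral_dominated_convergence[where w = "\<lambda>y. max W 0 * exp (- c * (\<Sum>j\<in>J. (y j)\<^sup>2))"])
  show "integrable M (\<lambda>y. max W 0 * exp (- c * (\<Sum>j\<in>J. (y j)\<^sup>2)))"
    using integrable_exp_neg_sum_squares_PiM[OF finite_J c_pos] by simp
  show "AE y in M. norm (near (Suc n) (shift (Suc n) y)) \<le> max W 0 * exp (- c * (\<Sum>j\<in>J. (y j)\<^sup>2))" for n
    using near_shift_le by simp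
  show "AE y in M. (\<lambda>n. near (Suc n) (shift (Suc n) y)) \<longlonglongrightarrow> exp (- q y / 2) * w0"
  proof (rule AE_I2)
    fix y
    have "(\<lambda>n. S / real (Suc n)) \<longlonglongrightarrow> 0" for S :: real by real_asymp
    then have "\<forall>\<^sub>F n in sequentially. (\<Sum>j\<in>J. (y j)\<^sup>2) / real (Suc n) < \<delta>"
      using \<delta>_pos by (intro order_tendstoD)
    then have "\<forall>\<^sub>F n in sequentially.
        E (shift (Suc n) y) ^ Suc n * w (shift (Suc n) y) = near (Suc n) (shift (Suc n) y)"
      by eventually_elim (simp add: near_def sum_squares_shift del: of_nat_Suc)
    moreover have "(\<lambda>n. E (shift (Suc n) y) ^ Suc n * w (shift (Suc n) y)) \<longlonglongrightarrow> exp (- q y / 2) * w0"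
      using LIMSEQ_Suc[OF pointwise_limit[of y]] by (simp add: shift_def)
    ultimately show "(\<lambda>n. near (Suc n) (shift (Suc n) y)) \<longlonglongrightarrow> exp (- q y / 2) * w0"
      by (rule Lim_transform_eventually[rotated])
  qed
qed measurable

lemma near_part:
  "(\<lambda>n. sqrt n ^ card J * (\<integral>x. near n x \<partial>M)) \<longlonglongrightarrow> w0 * (\<integral>y. exp (- q y / 2) \<partial>M)"
proof -
  have "(\<lambda>n. sqrt (Suc n) ^ card J * (\<integral>x. near (Suc n) x \<partial>M)) \<longlonglongrightarrow> w0 * (\<integral>y. exp (- q y / 2) \<partial>M)"
    using near_shift_limit by (simp add: near_rescaled mult.commute del: of_nat_Suc)
  then show ?thesis by (rule LIMSEQ_imp_Suc)
qed

theorem laplace_limit: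
  "(\<lambda>n. sqrt n ^ card J * (\<integral>x. E x ^ n * w x \<partial>M)) \<longlonglongrightarrow> w0 * (\<integral>y. exp (- q y / 2) \<partial>M)"
proof -
  let ?far = "\<lambda>n x. if \<delta> \<le> (\<Sum>j\<in>J. (x j - x0 j)\<^sup>2) then E x ^ n * w x else 0"
  have "(\<integral>x. E x ^ n * w x \<partial>M) = (\<integral>x. near n x + ?far n x \<partial>M)" for n
    by (intro Bochner_Integration.integral_cong) (auto simp: near_def)
  also have "\<dots> n = (\<integral>x. near n x \<partial>M) + (\<integral>x. ?far n x \<partial>M)" for n
    unfolding near_def using finite_J by (intro Bochner_Integration.integral_add integrable_restricted_power) measurable
  finally show ?thesis
    using tendsto_add[OF near_part far_part] by (simp add: distrib_left)
qed

end

section \<open>Coordinates on the simplex\<close>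

definition free_coords :: "'k::finite set" where
  "free_coords = UNIV - {last_coord}"

definition lift_tangent :: "('k::finite \<Rightarrow> real) \<Rightarrow> 'k \<Rightarrow> real" where
  "lift_tangent y k = (if k = last_coord then - (\<Sum>j\<in>free_coords. y j) else y k)"

definition tangent_form :: "('k::finite \<Rightarrow> 'k \<Rightarrow> real) \<Rightarrow> 'k \<Rightarrow> 'k \<Rightarrow> real" where
  "tangent_form N i j = N i j - N i last_coord - N last_coord j + N last_coord last_coord"

lemma last_coord_notin_free_coords [simp]: "last_coord \<notin> free_coords"
  by (simp add: free_coords_def)

lemma in_free_coords: "k \<in> free_coords \<longleftrightarrow> k \<noteq> last_coord"
  by (simp add: free_coords_def)

lemma sum_split_last_coord: "(\<Sum>k\<in>UNIV. f k) = f last_coord + (\<Sum>j\<in>free_coords. f j)"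
proof -
  have "UNIV = insert last_coord free_coords" by (auto simp: free_coords_def)
  then show ?thesis unfolding \<open>UNIV = _\<close> by (simp add: sum.insert)
qed

lemma card_free_coords: "card (free_coords :: 'k::finite set) = CARD('k) - 1"
  unfolding free_coords_def by (simp add: card_Diff_singleton)

lemma lift_simplex_apply:
  "lift_simplex x k = (if k = last_coord then 1 - (\<Sum>j\<in>free_coords. x j) else x k)"
  by (simp add: lift_simplex_def free_coords_def)

lemma lift_simplex_mem_iff: "lift_simplex x \<in> prob_simplex \<longleftrightarrow> (\<forall>k. 0 \<le> lift_simplex x k)"
proof -
  have "(\<Sum>j\<in>free_coords. lift_simplex x j) = (\<Sum>j\<in>free_coords. x j)"
    by (intro sum.cong refl) (simp add: lift_simplex_apply in_free_coords)
  then have "(\<Sum>k\<in>UNIV. lift_simplex x k) = 1"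
    by (simp add: sum_split_last_coord lift_simplex_apply)
  then show ?thesis by (simp add: prob_simplex_def)
qed

lemma lift_simplex_eq:
  assumes "(\<Sum>k\<in>UNIV. t k) = 1"
  shows "lift_simplex x = (\<lambda>k. t k + lift_tangent (\<lambda>j. x j - t j) k)"
proof
  fix k
  have "t last_coord + (\<Sum>j\<in>free_coords. t j) = 1"
    using assms sum_split_last_coord[of t] by simp
  then show "lift_simplex x k = t k + lift_tangent (\<lambda>j. x j - t j) k"
    by (simp add: lift_simplex_apply lift_tangent_def sum_subtractf)
qed

lemma sum_lift_tangent: "(\<Sum>k\<in>UNIV. lift_tangent y k) = 0"
proof -
  have "(\<Sum>j\<in>free_coords. lift_tangent y j) = (\<Sum>j\<in>free_coords. y j)"
    by (intro sum.cong refl) (auto simp: lift_tangent_def in_free_coords)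
  then show ?thesis by (simp add: sum_split_last_coord lift_tangent_def)
qed

lemma sum_squares_le_lift_tangent:
  "(\<Sum>j\<in>free_coords. (y j)\<^sup>2) \<le> (\<Sum>k\<in>UNIV. (lift_tangent y k)\<^sup>2)"
proof -
  have "(\<Sum>j\<in>free_coords. (lift_tangent y j)\<^sup>2) = (\<Sum>j\<in>free_coords. (y j)\<^sup>2)"
    by (intro sum.cong refl) (auto simp: lift_tangent_def in_free_coords)
  then show ?thesis by (simp add: sum_split_last_coord)
qed

lemma lift_tangent_divide: "lift_tangent (\<lambda>j. y j / r) = (\<lambda>k. lift_tangent y k / r)"
  by (auto simp: lift_tangent_def sum_divide_distrib fun_eq_iff)

lemma lift_tangent_cong:
  "(\<And>j. j \<in> free_coords \<Longrightarrow> y j = y' j) \<Longrightarrow> lift_tangent y = lift_tangent y'"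
  by (auto simp: lift_tangent_def fun_eq_iff in_free_coords)

lemma lift_tangent_nonzero: "i \<in> free_coords \<Longrightarrow> y i \<noteq> 0 \<Longrightarrow> \<exists>k. lift_tangent y k \<noteq> 0"
  by (rule exI[of _ i]) (simp add: lift_tangent_def in_free_coords)

lemma lift_tangent_abs_le:
  fixes y :: "'k::finite \<Rightarrow> real" and \<eta> :: real
  assumes "0 \<le> \<eta>" and "\<And>j. j \<in> free_coords \<Longrightarrow> \<bar>y j\<bar> \<le> \<eta>"
  shows "\<bar>lift_tangent y k\<bar> \<le> CARD('k) * \<eta>"
proof (cases "k = last_coord")
  case True
  have "\<bar>lift_tangent y k\<bar> \<le> (\<Sum>j\<in>free_coords. \<bar>y j\<bar>)"
    using True by (simp add: lift_tangent_def sum_abs)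
  also have "\<dots> \<le> card (free_coords :: 'k set) * \<eta>"
    using assms(2) by (rule sum_bounded_above)
  also have "\<dots> \<le> CARD('k) * \<eta>"
    using assms(1) by (intro mult_right_mono) (auto simp: card_free_coords)
  finally show ?thesis .
next
  case False
  then have "\<bar>lift_tangent y k\<bar> \<le> 1 * \<eta>"
    using assms(2) by (simp add: lift_tangent_def in_free_coords)
  also have "\<dots> \<le> CARD('k) * \<eta>"
    using assms(1) by (intro mult_right_mono) (auto simp: Suc_le_eq)
  finally show ?thesis .
qed

lemma lift_simplex_shift:
  assumes "(\<Sum>k\<in>UNIV. t k) = 1"
  shows "lift_simplex (\<lambda>j\<in>free_coords. t j + y j / r) = (\<lambda>k. t k + lift_tangent y k / r)"
proof -
  have "lift_tangent (\<lambda>j. (\<lambda>j\<in>free_coords. t j + y j / r) j - t j) = lift_tangent (\<lambda>j. y j / r)"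
    by (rule lift_tangent_cong) simp
  then show ?thesis unfolding lift_simplex_eq[OF assms] lift_tangent_divide by simp
qed

lemma quad_form_lift_tangent:
  "(\<Sum>i\<in>UNIV. \<Sum>j\<in>UNIV. lift_tangent y i * N i j * lift_tangent y j)
     = quad_form free_coords (tangent_form N) y"
proof -
  define l where "l = (last_coord :: 'a)"
  define S where "S = (\<Sum>j\<in>free_coords. y j)"
  have hl: "lift_tangent y l = - S" by (simp add: lift_tangent_def S_def l_def)
  have hj: "lift_tangent y j = y j" if "j \<in> free_coords" for j
    using that by (simp add: lift_tangent_def in_free_coords)
  have "(\<Sum>i\<in>UNIV. \<Sum>j\<in>UNIV. lift_tangent y i * N i j * lift_tangent y j)
      = S * S * N l l - S * (\<Sum>j\<in>free_coords. N l j * y j) - S * (\<Sum>i\<in>free_coords. y i * N i l)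
        + quad_form free_coords N y"
    unfolding sum_split_last_coord[where f = "\<lambda>i. \<Sum>j\<in>UNIV. _ i j"] sum_split_last_coord[where f = "\<lambda>j. _ j"]
    by (simp add: l_def[symmetric] hl hj quad_form_def sum.distrib sum_distrib_left mult_ac cong: sum.cong)
       (simp add: sum_subtractf sum_negf)
  also have "\<dots> = quad_form free_coords (tangent_form N) y"
  proof -
    have "quad_form free_coords (tangent_form N) y = quad_form free_coords N y
        - quad_form free_coords (\<lambda>i j. N i l) y - quad_form free_coords (\<lambda>i j. N l j) y
        + quad_form free_coords (\<lambda>i j. N l l) y"
      unfolding quad_form_def tangent_form_def l_def
      by (simp add: algebra_simps sum_subtractf sum.distrib)
    moreover have "quad_form free_coords (\<lambda>i j. N i l) y = (\<Sum>i\<in>free_coords. y i * N i l) * S"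
      unfolding quad_form_def S_def sum_product by (simp add: sum_distrib_left sum_distrib_right mult_ac)
    moreover have "quad_form free_coords (\<lambda>i j. N l j) y = S * (\<Sum>j\<in>free_coords. N l j * y j)"
      unfolding quad_form_def S_def sum_product by (simp add: sum_distrib_left sum_distrib_right mult_ac)
    moreover have "quad_form free_coords (\<lambda>i j. N l l) y = S * S * N l l"
      unfolding quad_form_def S_def sum_product by (simp add: sum_distrib_left sum_distrib_right mult_ac)
    ultimately show ?thesis by simp
  qed
  finally show ?thesis .
qed

text \<open>The columns \<open>e\<^sub>b - e\<^sub>l\<close> (\<open>b \<noteq> l\<close>, \<open>l\<close> the last coordinate) span the hyperplane \<open>\<Sum> = 0\<close>,
  and \<open>t\<close> completes them to a basis.\<close>
definition tangent_basis :: "('k::finite \<Rightarrow> real) \<Rightarrow> real^'k^'k" where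
  "tangent_basis t = (\<chi> i b. if b = last_coord then t i
                              else (if i = b then 1 else 0) - (if i = last_coord then 1 else 0))"

lemma det_tangent_basis:
  fixes t :: "'k::finite \<Rightarrow> real"
  assumes t: "(\<Sum>k\<in>UNIV. t k) = 1"
  shows "det (tangent_basis t) = 1"
proof -
  define w :: "'k \<Rightarrow> real" where "w = (\<lambda>j. if j = last_coord then 0 else 1)"
  define M :: "real^'k^'k" where
    "M = (\<chi> i j. (if i = j then 1 else 0) - (if i = last_coord then w j else 0))"
  define x :: "real^'k" where "x = (\<Sum>j\<in>free_coords. t j *s row j (transpose M))"
  have x_span: "x \<in> vec.span {row j (transpose M) |j. j \<noteq> last_coord}"
    unfolding x_def by (intro vec.span_sum vec.span_scale vec.span_base) (auto simp: in_free_coords)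
  have "x $ b = (\<Sum>j\<in>free_coords. t j * ((if j = b then 1 else 0) - (if b = last_coord then 1 else 0)))" for b
    unfolding x_def sum_component
    by (intro sum.cong refl) (auto simp: row_def transpose_def M_def w_def in_free_coords)
  also have "\<dots> b = (if b = last_coord then t b - 1 else t b)" for b
  proof -
    have "t last_coord + (\<Sum>j\<in>free_coords. t j) = 1" using t sum_split_last_coord[of t] by simp
    then show ?thesis
      by (cases "b = last_coord")
         (simp_all add: right_diff_distrib sum_subtractf sum_negf in_free_coords if_distrib[of "\<lambda>x. _ * x"]
          sum.delta cong: if_cong)
  qed
  finally have "transpose (tangent_basis t)
      = (\<chi> k. if k = last_coord then row last_coord (transpose M) + x else row k (transpose M))"
    by (auto simp: vec_eq_iff transpose_def tangent_basis_def M_def w_def row_def)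
  then have "det (transpose (tangent_basis t)) = det (transpose M)"
    using det_row_span[OF x_span] by simp
  also have "\<dots> = 1" unfolding M_def by (simp add: det_shear w_def)
  finally show ?thesis by simp
qed

text \<open>Congruence by \<open>tangent_basis t\<close> splits off the direction \<open>t\<close>, along which
  \<open>N t = c \<one>\<close>, and leaves the restriction of \<open>N\<close> to the hyperplane \<open>\<Sum> = 0\<close>.\<close>
lemma det_eq_tangent_form:
  fixes N :: "'k::finite \<Rightarrow> 'k \<Rightarrow> real"
  assumes sym: "\<And>i j. N i j = N j i" and t: "(\<Sum>k\<in>UNIV. t k) = 1"
    and Nt: "\<And>i. (\<Sum>j\<in>UNIV. N i j * t j) = c"
  shows "det (\<chi> i j. N i j :: real^'k^'k) = c * det_on free_coords (tangent_form N)"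
proof -
  define P where "P = tangent_basis t"
  define Nm :: "real^'k^'k" where "Nm = (\<chi> i j. N i j)"
  define E where "E = mat_on free_coords (tangent_form N)"
  have NP: "(Nm ** P) $ i $ b = (if b = last_coord then c else N i b - N i last_coord)" for i b
    using Nt[of i] unfolding matrix_matrix_mult_def Nm_def P_def tangent_basis_def
    by (simp add: right_diff_distrib sum_subtractf if_distrib[of "\<lambda>t. _ * t"] sum.delta cong: if_cong)
  have PtX: "(transpose P ** X) $ a $ b
      = (if a = last_coord then (\<Sum>i\<in>UNIV. t i * X $ i $ b) else X $ a $ b - X $ last_coord $ b)" for X a b
    unfolding matrix_matrix_mult_def transpose_def P_def tangent_basis_def
    by (simp add: left_diff_distrib sum_subtractf if_distrib[of "\<lambda>t. t * _"] sum.delta cong: if_cong)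
  have tN: "(\<Sum>i\<in>UNIV. t i * N i b) = c" for b
    using Nt[of b] by (simp add: sym[of _ b] mult.commute)
  have "(transpose P ** (Nm ** P)) $ a $ b = (if a = last_coord then c * E $ a $ b else E $ a $ b)" for a b
  proof (cases "a = last_coord")
    case True
    have "(\<Sum>i\<in>UNIV. t i * (N i b - N i last_coord)) = c - c"
      using tN[of b] tN[of last_coord] by (simp add: right_diff_distrib sum_subtractf)
    then show ?thesis
      using True t by (simp add: PtX NP E_def mat_on_def sum_distrib_right[symmetric])
  next
    case False
    then show ?thesis
      by (simp add: PtX NP E_def mat_on_def tangent_form_def in_free_coords)
  qed
  then have "transpose P ** (Nm ** P) = (\<chi> a. if a = last_coord then c *s row a E else row a E)"
    by (simp add: vec_eq_iff row_def)
  moreover have "det (transpose P ** (Nm ** P)) = det Nm"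
    by (simp add: det_mul det_tangent_basis[OF t] P_def)
  ultimately have "det Nm = c * det (\<chi> a. if a = last_coord then row a E else row a E)"
    using det_row_mul[of last_coord c "\<lambda>a. row a E"] by simp
  also have "(\<chi> a. if a = last_coord then row a E else row a E) = E"
    by (simp add: vec_eq_iff row_def)
  finally show ?thesis unfolding Nm_def E_def det_on_def .
qed

section \<open>The Dirichlet density in coordinates\<close>

lemma measurable_lift_simplex_apply [measurable]:
  "(\<lambda>x. lift_simplex x k) \<in> borel_measurable (PiM free_coords (\<lambda>_. lborel))"
  by (cases "k = last_coord") (simp_all add: lift_simplex_apply in_free_coords)

lemma measurable_lift_simplex [measurable]:
  "lift_simplex \<in> PiM free_coords (\<lambda>_. lborel) \<rightarrow>\<^sub>M PiM UNIV (\<lambda>_. lborel :: real measure)"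
  by (intro measurable_PiM_single') (auto simp: space_PiM)

lemma measurable_dir_density [measurable]:
  "dir_density \<alpha> \<in> borel_measurable (PiM UNIV (\<lambda>_. lborel))"
  unfolding dir_density_def[abs_def] prob_simplex_def by measurable

definition chart_density :: "('k::finite \<Rightarrow> real) \<Rightarrow> ('k \<Rightarrow> real) \<Rightarrow> real" where
  "chart_density \<alpha> x = dir_density \<alpha> (lift_simplex x)"

lemma measurable_chart_density [measurable]:
  "chart_density \<alpha> \<in> borel_measurable (PiM free_coords (\<lambda>_. lborel))"
  unfolding chart_density_def[abs_def] by measurable

lemma dir_expect_eq_chart:
  "dir_expect \<alpha> f = (\<integral>x. f (lift_simplex x) * chart_density \<alpha> x \<partial>PiM free_coords (\<lambda>_. lborel))"
  unfolding dir_expect_def chart_density_def free_coords_def ..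

lemma mbeta_pos: "(\<And>k. 0 < \<alpha> k) \<Longrightarrow> 0 < mbeta \<alpha>"
  unfolding mbeta_def by (intro divide_pos_pos prod_pos Gamma_real_pos sum_pos) auto

lemma dir_density_simplex:
  "\<theta> \<in> prob_simplex \<Longrightarrow> dir_density \<alpha> \<theta> = (\<Prod>i\<in>UNIV. \<theta> i powr (\<alpha> i - 1)) / mbeta \<alpha>"
  by (simp add: dir_density_def)

lemma dir_density_pos:
  assumes "t \<in> prob_simplex" "\<And>k. 0 < t k" "\<And>k. 0 < \<alpha> k"
  shows "0 < dir_density \<alpha> t"
proof -
  have "t k \<noteq> 0" for k using assms(2)[of k] by simp
  then show ?thesis
    using assms by (auto simp: dir_density_simplex intro!: divide_pos_pos prod_pos mbeta_pos)
qed

lemma chart_density_nonneg: "(\<And>k. 0 < \<alpha> k) \<Longrightarrow> 0 \<le> chart_density \<alpha> x"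
  unfolding chart_density_def dir_density_def
  by (auto intro!: prod_nonneg divide_nonneg_pos mbeta_pos)

lemma chart_density_nonzero_simplex: "chart_density \<alpha> x \<noteq> 0 \<Longrightarrow> lift_simplex x \<in> prob_simplex"
  unfolding chart_density_def dir_density_def by (auto split: if_splits)

lemma simplex_le_one: "\<theta> \<in> prob_simplex \<Longrightarrow> \<theta> k \<le> 1"
  unfolding prob_simplex_def using member_le_sum[of k UNIV \<theta>] by auto

lemma powr_le_add_endpoints:
  fixes t a lo hi :: real
  assumes "0 < lo" "lo \<le> t" "t \<le> hi"
  shows "t powr a \<le> lo powr a + hi powr a"
proof (cases "0 \<le> a")
  case True
  then have "t powr a \<le> hi powr a" using assms by (intro powr_mono2) auto
  then show ?thesis by (simp add: add_increasing)
next
  case False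
  then have "t powr a \<le> lo powr a" using assms by (intro powr_mono2') auto
  then show ?thesis by (simp add: add_increasing2)
qed

lemma dir_density_le_on_box:
  assumes "\<theta> \<in> prob_simplex" "0 < lo" "\<And>k. lo \<le> \<theta> k" "\<And>k. \<theta> k \<le> hi" "\<And>k. 0 < \<alpha> k"
  shows "dir_density \<alpha> \<theta> \<le> (\<Prod>i\<in>UNIV. lo powr (\<alpha> i - 1) + hi powr (\<alpha> i - 1)) / mbeta \<alpha>"
  using assms mbeta_pos[of \<alpha>]
  by (auto simp: dir_density_simplex intro!: divide_right_mono prod_mono powr_le_add_endpoints)

lemma chart_density_bounded_near:
  fixes t :: "'k::finite \<Rightarrow> real"
  assumes t: "t \<in> prob_simplex" and t_pos: "\<And>k. 0 < t k" and \<alpha>: "\<And>k. 0 < \<alpha> k"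
  obtains \<delta> W where "0 < \<delta>" "\<And>x. (\<Sum>j\<in>free_coords. (x j - t j)\<^sup>2) < \<delta> \<Longrightarrow> chart_density \<alpha> x \<le> W"
proof
  define m where "m = Min (range t)"
  have m: "0 < m" "\<And>k. m \<le> t k" unfolding m_def using t_pos by auto
  define \<eta> where "\<eta> = m / (2 * CARD('k))"
  have \<eta>: "0 < \<eta>" "CARD('k) * \<eta> = m / 2" using m by (auto simp: \<eta>_def)
  show "0 < \<eta>\<^sup>2" using \<eta> by simp
  fix x :: "'k \<Rightarrow> real" assume x: "(\<Sum>j\<in>free_coords. (x j - t j)\<^sup>2) < \<eta>\<^sup>2"
  have sq: "(x j - t j)\<^sup>2 < \<eta>\<^sup>2" if "j \<in> free_coords" for j
    using x member_le_sum[of j free_coords "\<lambda>j. (x j - t j)\<^sup>2"] that by simp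
  have "\<bar>x j - t j\<bar> \<le> \<eta>" if "j \<in> free_coords" for j
    using sq[OF that] \<eta>(1) power2_le_iff_abs_le[of \<eta> "x j - t j"] by simp
  then have "\<bar>lift_tangent (\<lambda>j. x j - t j) k\<bar> \<le> CARD('k) * \<eta>" for k
    using \<eta>(1) by (intro lift_tangent_abs_le) auto
  then have dev: "\<bar>lift_tangent (\<lambda>j. x j - t j) k\<bar> \<le> m / 2" for k
    using \<eta>(2) by simp
  have box: "m / 2 \<le> lift_simplex x k" "lift_simplex x k \<le> 2" for k
  proof -
    have "lift_simplex x k = t k + lift_tangent (\<lambda>j. x j - t j) k"
      using t lift_simplex_eq[of t x] by (simp add: prob_simplex_def)
    moreover have "- (m / 2) \<le> lift_tangent (\<lambda>j. x j - t j) k" "lift_tangent (\<lambda>j. x j - t j) k \<le> m / 2"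
      using dev[of k] by (simp_all add: abs_le_iff)
    ultimately show "m / 2 \<le> lift_simplex x k" "lift_simplex x k \<le> 2"
      using m(2)[of k] simplex_le_one[OF t, of k] by linarith+
  qed
  have "lift_simplex x \<in> prob_simplex"
    using box(1) m(1) unfolding lift_simplex_mem_iff by (meson half_gt_zero less_imp_le order_trans)
  then show "chart_density \<alpha> x \<le> (\<Prod>i\<in>UNIV. (m / 2) powr (\<alpha> i - 1) + 2 powr (\<alpha> i - 1)) / mbeta \<alpha>"
    unfolding chart_density_def using box m \<alpha> by (intro dir_density_le_on_box) auto
qed

lemma eventually_pos_add_divide_sqrt:
  "0 < a \<Longrightarrow> \<forall>\<^sub>F n in sequentially. 0 < a + b / sqrt (real n)"
proof -
  assume "0 < a"
  have "(\<lambda>n. b / sqrt (real n)) \<longlonglongrightarrow> 0" by real_asymp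
  then have "\<forall>\<^sub>F n in sequentially. - a < b / sqrt (real n)"
    using \<open>0 < a\<close> by (intro order_tendstoD) auto
  then show ?thesis by eventually_elim simp
qed

lemma chart_density_shift_limit:
  fixes t :: "'k::finite \<Rightarrow> real"
  assumes t: "t \<in> prob_simplex" and t_pos: "\<And>k. 0 < t k" and \<alpha>: "\<And>k. 0 < \<alpha> k"
  shows "(\<lambda>n. chart_density \<alpha> (\<lambda>j\<in>free_coords. t j + y j / sqrt n)) \<longlonglongrightarrow> dir_density \<alpha> t"
proof -
  have t1: "(\<Sum>k\<in>UNIV. t k) = 1" using t by (simp add: prob_simplex_def)
  have "(\<lambda>n. (\<Prod>i\<in>UNIV. (t i + lift_tangent y i / sqrt n) powr (\<alpha> i - 1)) / mbeta \<alpha>)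
      \<longlonglongrightarrow> (\<Prod>i\<in>UNIV. (t i + 0) powr (\<alpha> i - 1)) / mbeta \<alpha>"
  proof -
    have "(\<lambda>n. b / sqrt (real n)) \<longlonglongrightarrow> 0" for b :: real by real_asymp
    moreover have "mbeta \<alpha> \<noteq> 0" using mbeta_pos[of \<alpha>] \<alpha> by simp
    ultimately show ?thesis using t_pos by (intro tendsto_intros) (auto simp: less_imp_neq[symmetric])
  qed
  moreover have "\<forall>\<^sub>F n in sequentially. \<forall>k. 0 < t k + lift_tangent y k / sqrt n"
    using t_pos by (intro eventually_all_finite eventually_pos_add_divide_sqrt)
  then have "\<forall>\<^sub>F n in sequentially. (\<Prod>i\<in>UNIV. (t i + lift_tangent y i / sqrt n) powr (\<alpha> i - 1)) / mbeta \<alpha>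
      = chart_density \<alpha> (\<lambda>j\<in>free_coords. t j + y j / sqrt n)"
  proof eventually_elim
    case (elim n)
    then have "lift_simplex (\<lambda>j\<in>free_coords. t j + y j / sqrt n) \<in> prob_simplex"
      unfolding lift_simplex_mem_iff by (simp add: lift_simplex_shift[OF t1] less_imp_le)
    then show ?case
      unfolding chart_density_def by (simp add: dir_density_simplex lift_simplex_shift[OF t1])
  qed
  ultimately show ?thesis
    using t by (simp add: Lim_transform_eventually dir_density_simplex)
qed

definition beta_kernel :: "real \<Rightarrow> real \<Rightarrow> real" where
  "beta_kernel a t = (if 0 \<le> t \<and> t \<le> 1 then t powr (a - 1) else 0)"

lemma beta_kernel_nonneg: "0 \<le> beta_kernel a t"
  by (simp add: beta_kernel_def)

lemma measurable_beta_kernel [measurable]: "beta_kernel a \<in> borel_measurable borel"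
  unfolding beta_kernel_def[abs_def] by measurable

lemma nn_integral_beta_kernel:
  assumes "0 < a"
  shows "(\<integral>\<^sup>+t. ennreal (beta_kernel a t) \<partial>lborel) = ennreal (1 / a)"
proof -
  have "((\<lambda>t. t powr (a - 1)) has_integral (1 powr (a - 1 + 1) / (a - 1 + 1))) {0..1}"
    by (rule has_integral_powr_from_0) (use assms in auto)
  then have "(\<integral>\<^sup>+t. ennreal (t powr (a - 1)) * indicator {0..1} t \<partial>lborel) = ennreal (1 / a)"
    by (subst nn_integral_has_integral_lebesgue') auto
  moreover have "ennreal (beta_kernel a t) = ennreal (t powr (a - 1)) * indicator {0..1} t" for t
    by (simp add: beta_kernel_def indicator_def)
  ultimately show ?thesis by simp
qed

text \<open>Some coordinate of a point of the simplex is at least \<open>1/K\<close>, which bounds its factor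
  of the Dirichlet density even when its exponent is negative.\<close>
lemma prod_powr_le_sum_beta_kernels:
  fixes \<theta> :: "'k::finite \<Rightarrow> real"
  assumes \<theta>: "\<theta> \<in> prob_simplex"
  shows "(\<Prod>i\<in>UNIV. \<theta> i powr (\<alpha> i - 1))
           \<le> (\<Sum>k\<in>UNIV. (1 + (1 / CARD('k)) powr (\<alpha> k - 1)) * (\<Prod>i\<in>UNIV - {k}. beta_kernel (\<alpha> i) (\<theta> i)))"
proof -
  obtain k where k: "1 / CARD('k) \<le> \<theta> k"
  proof (rule ccontr)
    assume "\<not> thesis"
    then have "\<theta> i < 1 / CARD('k)" for i using that not_le by blast
    then have "(\<Sum>i\<in>UNIV. \<theta> i) < (\<Sum>i\<in>(UNIV::'k set). 1 / CARD('k))"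
      by (intro sum_strict_mono) auto
    then show False using \<theta> by (simp add: prob_simplex_def)
  qed
  have kernel: "\<theta> i powr (\<alpha> i - 1) = beta_kernel (\<alpha> i) (\<theta> i)" for i
    using \<theta> simplex_le_one[OF \<theta>] by (simp add: beta_kernel_def prob_simplex_def)
  have "\<theta> k powr (\<alpha> k - 1) \<le> (1 / CARD('k)) powr (\<alpha> k - 1) + 1 powr (\<alpha> k - 1)"
    using k simplex_le_one[OF \<theta>] by (intro powr_le_add_endpoints) auto
  then have "(\<Prod>i\<in>UNIV. \<theta> i powr (\<alpha> i - 1))
      \<le> (1 + (1 / CARD('k)) powr (\<alpha> k - 1)) * (\<Prod>i\<in>UNIV - {k}. beta_kernel (\<alpha> i) (\<theta> i))"
    by (auto simp: prod.remove[of UNIV k] kernel add.commute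
        intro!: mult_right_mono prod_nonneg beta_kernel_nonneg)
  also have "\<dots> \<le> (\<Sum>k\<in>UNIV. (1 + (1 / CARD('k)) powr (\<alpha> k - 1)) * (\<Prod>i\<in>UNIV - {k}. beta_kernel (\<alpha> i) (\<theta> i)))"
    by (rule member_le_sum) (auto intro!: mult_nonneg_nonneg prod_nonneg beta_kernel_nonneg add_nonneg_nonneg)
  finally show ?thesis .
qed

lemma nn_integral_beta_kernel_reflect:
  "0 < a \<Longrightarrow> (\<integral>\<^sup>+t. ennreal (beta_kernel a (c - t)) \<partial>lborel) = ennreal (1 / a)"
  using nn_integral_real_affine[of "\<lambda>t. ennreal (beta_kernel a t)" "- 1" c]
  by (simp add: nn_integral_beta_kernel)

lemma lift_simplex_fun_upd_last:
  assumes "k \<in> free_coords"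
  shows "lift_simplex (x(k := t)) last_coord = (1 - (\<Sum>j\<in>free_coords - {k}. x j)) - t"
proof -
  have "(\<Sum>j\<in>free_coords - {k}. if j = k then t else x j) = (\<Sum>j\<in>free_coords - {k}. x j)"
    by (intro sum.cong) auto
  then show ?thesis using assms by (simp add: lift_simplex_apply sum.remove[of free_coords k])
qed

lemma nn_integral_beta_kernels_chart:
  fixes \<alpha> :: "'k::finite \<Rightarrow> real"
  assumes \<alpha>: "\<And>k. 0 < \<alpha> k"
  shows "(\<integral>\<^sup>+x. (\<Prod>i\<in>UNIV - {k}. ennreal (beta_kernel (\<alpha> i) (lift_simplex x i))) \<partial>PiM free_coords (\<lambda>_. lborel))
           = (\<Prod>i\<in>UNIV - {k}. ennreal (1 / \<alpha> i))"
proof -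
  interpret product_sigma_finite "\<lambda>_. lborel :: real measure" by standard
  have kernel: "(\<integral>\<^sup>+t. ennreal (beta_kernel (\<alpha> i) t) \<partial>lborel) = ennreal (1 / \<alpha> i)" for i
    by (rule nn_integral_beta_kernel[OF \<alpha>])
  show ?thesis
  proof (cases "k = last_coord")
    case True
    then have "UNIV - {k} = free_coords" by (auto simp: free_coords_def)
    moreover have "(\<Prod>i\<in>free_coords. ennreal (beta_kernel (\<alpha> i) (lift_simplex x i)))
        = (\<Prod>i\<in>free_coords. ennreal (beta_kernel (\<alpha> i) (x i)))" for x
      by (intro prod.cong) (auto simp: lift_simplex_apply in_free_coords)
    ultimately show ?thesis
      unfolding kernel[symmetric] by simp (subst product_nn_integral_prod, auto)
  next
    text \<open>Integrate out the coordinate \<open>k\<close> first: it only enters through the last coordinate.\<close>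
    case False
    define F where "F = free_coords - {k}"
    have F: "free_coords = insert k F" "k \<notin> F" "finite F" "last_coord \<notin> F" "UNIV - {k} = insert last_coord F"
      "k \<in> free_coords"
      using False by (auto simp: F_def free_coords_def)
    have "lift_simplex (x(k := t)) i = x i" if "i \<in> F" for x t i
      using that F by (auto simp: lift_simplex_apply)
    then have kernels_upd: "(\<Prod>i\<in>UNIV - {k}. ennreal (beta_kernel (\<alpha> i) (lift_simplex (x(k := t)) i)))
        = ennreal (beta_kernel (\<alpha> last_coord) ((1 - (\<Sum>j\<in>F. x j)) - t))
          * (\<Prod>i\<in>F. ennreal (beta_kernel (\<alpha> i) (x i)))" for x t
      using F by (simp add: lift_simplex_fun_upd_last F_def)
    have "(\<integral>\<^sup>+x. (\<Prod>i\<in>UNIV - {k}. ennreal (beta_kernel (\<alpha> i) (lift_simplex x i))) \<partial>PiM free_coords (\<lambda>_. lborel))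
        = (\<integral>\<^sup>+x. (\<integral>\<^sup>+t. ennreal (beta_kernel (\<alpha> last_coord) ((1 - (\<Sum>j\<in>F. x j)) - t))
             * (\<Prod>i\<in>F. ennreal (beta_kernel (\<alpha> i) (x i))) \<partial>lborel) \<partial>PiM F (\<lambda>_. lborel))"
      unfolding F(1) kernels_upd[symmetric] using F by (subst product_nn_integral_insert) auto
    also have "\<dots> = (\<integral>\<^sup>+x. ennreal (1 / \<alpha> last_coord) * (\<Prod>i\<in>F. ennreal (beta_kernel (\<alpha> i) (x i)))
                        \<partial>PiM F (\<lambda>_. lborel))"
      by (simp add: nn_integral_multc nn_integral_beta_kernel_reflect \<alpha>)
    also have "\<dots> = ennreal (1 / \<alpha> last_coord) * (\<Prod>i\<in>F. ennreal (1 / \<alpha> i))"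
      using F by (simp add: nn_integral_cmult) (subst product_nn_integral_prod, auto simp: kernel)
    finally show ?thesis using F by simp
  qed
qed

lemma integrable_chart_density:
  fixes \<alpha> :: "'k::finite \<Rightarrow> real"
  assumes \<alpha>: "\<And>k. 0 < \<alpha> k"
  shows "integrable (PiM free_coords (\<lambda>_. lborel)) (chart_density \<alpha>)"
proof (rule Bochner_Integration.integrable_bound)
  define C where "C k = (1 + (1 / CARD('k)) powr (\<alpha> k - 1)) / mbeta \<alpha>" for k
  define G where "G k x = (\<Prod>i\<in>UNIV - {k}. beta_kernel (\<alpha> i) (lift_simplex x i))" for k x
  have G_measurable: "G k \<in> borel_measurable (PiM free_coords (\<lambda>_. lborel))" for k
    unfolding G_def[abs_def]
    by (intro borel_measurable_prod measurable_compose[OF measurable_lift_simplex_apply measurable_beta_kernel])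
  have "integrable (PiM free_coords (\<lambda>_. lborel)) (G k)" for k
  proof (rule integrableI_nonneg)
    show "(\<integral>\<^sup>+x. ennreal (G k x) \<partial>PiM free_coords (\<lambda>_. lborel)) < \<infinity>"
      using nn_integral_beta_kernels_chart[of \<alpha> k] \<alpha>
      by (simp add: G_def prod_ennreal beta_kernel_nonneg less_imp_le less_top[symmetric])
  qed (auto simp: G_measurable G_def beta_kernel_nonneg prod_nonneg)
  then show "integrable (PiM free_coords (\<lambda>_. lborel)) (\<lambda>x. \<Sum>k\<in>UNIV. C k * G k x)"
    by (intro Bochner_Integration.integrable_sum Bochner_Integration.integrable_mult_right)
  have "chart_density \<alpha> x \<le> (\<Sum>k\<in>UNIV. C k * G k x)" for x
  proof (cases "lift_simplex x \<in> prob_simplex")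
    case True
    then show ?thesis
      using prod_powr_le_sum_beta_kernels[OF True, of \<alpha>] mbeta_pos[of \<alpha>] \<alpha>
      by (simp add: chart_density_def dir_density_simplex C_def G_def sum_divide_distrib[symmetric]
          divide_right_mono)
  next
    case False
    then show ?thesis
      using mbeta_pos[of \<alpha>] \<alpha>
      by (auto simp: chart_density_def dir_density_def C_def G_def
          intro!: sum_nonneg mult_nonneg_nonneg divide_nonneg_pos prod_nonneg beta_kernel_nonneg)
  qed
  then show "AE x in PiM free_coords (\<lambda>_. lborel). norm (chart_density \<alpha> x) \<le> norm (\<Sum>k\<in>UNIV. C k * G k x)"
  proof (intro AE_I2)
    fix x
    have "0 \<le> chart_density \<alpha> x" using \<alpha> by (rule chart_density_nonneg)
    then show "norm (chart_density \<alpha> x) \<le> norm (\<Sum>k\<in>UNIV. C k * G k x)"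
      using \<open>chart_density \<alpha> x \<le> (\<Sum>k\<in>UNIV. C k * G k x)\<close> by simp
  qed
qed simp

section \<open>The LDA log-likelihood and its KL surrogate near the maximiser\<close>

definition ln_remainder :: "real \<Rightarrow> real" where
  "ln_remainder u = ln (1 + u) - u"

lemma ln_remainder_le:
  fixes u U :: real
  assumes U: "0 \<le> U" and u: "-1 < u" "u \<le> U"
  shows "ln_remainder u \<le> - u\<^sup>2 / (2 * (1 + U))"
proof -
  define h where "h x = ln (1 + x) - x + x\<^sup>2 / (2 * (1 + U))" for x :: real
  have h': "(h has_real_derivative x * (1 / (1 + U) - 1 / (1 + x))) (at x)" if "-1 < x" for x
  proof -
    have "1 / (1 + x) - 1 = - x / (1 + x)" using that by (simp add: field_simps)
    moreover have "2 * x / (2 * (1 + U)) = x / (1 + U)"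
      by (rule mult_divide_mult_cancel_left) simp
    ultimately have "1 / (1 + x) - 1 + 2 * x / (2 * (1 + U)) = x * (1 / (1 + U) - 1 / (1 + x))"
      by (simp add: right_diff_distrib)
    moreover have "(h has_real_derivative 1 / (1 + x) - 1 + 2 * x / (2 * (1 + U))) (at x)"
      unfolding h_def using that U by (auto intro!: derivative_eq_intros simp: divide_inverse)
    ultimately show ?thesis by simp
  qed
  text \<open>\<open>h' \<le> 0\<close> on \<open>[0, U]\<close> and \<open>h' \<ge> 0\<close> on \<open>(-1, 0]\<close>, so \<open>h\<close> is maximal at \<open>0\<close>.\<close>
  have "h u \<le> h 0"
  proof (cases "0 \<le> u")
    case True
    have "- h 0 \<le> - h u"
    proof (rule DERIV_nonneg_imp_nondecreasing[OF True, of "\<lambda>x. - h x"])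
      fix x :: real assume x: "0 \<le> x" "x \<le> u"
      have "x * (1 / (1 + U) - 1 / (1 + x)) \<le> 0"
        using x u U by (intro mult_nonneg_nonpos) (auto simp: divide_left_mono)
      then show "\<exists>y. ((\<lambda>x. - h x) has_real_derivative y) (at x) \<and> 0 \<le> y"
        using DERIV_minus[OF h'[of x]] x by auto
    qed
    then show ?thesis by simp
  next
    case False
    show ?thesis
    proof (rule DERIV_nonneg_imp_nondecreasing[of u 0 h])
      fix x :: real assume x: "u \<le> x" "x \<le> 0"
      have "0 \<le> x * (1 / (1 + U) - 1 / (1 + x))"
        using x u U by (intro mult_nonpos_nonpos) (auto simp: divide_left_mono)
      then show "\<exists>y. (h has_real_derivative y) (at x) \<and> 0 \<le> y"
        using h'[of x] x u by auto
    qed (use False in simp)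
  qed
  then show ?thesis by (simp add: h_def ln_remainder_def)
qed

lemma tendsto_ln_remainder_scaled:
  "(\<lambda>n::nat. real n * ln_remainder (a / sqrt (real n))) \<longlonglongrightarrow> - a\<^sup>2 / 2"
proof -
  have "(\<lambda>n::nat. real n * ln_remainder (a / sqrt (real n))) \<longlonglongrightarrow> - (a * a / 2)"
    unfolding ln_remainder_def by real_asymp
  then show ?thesis by (simp add: power2_eq_square)
qed

lemma quadratic_coercive:
  fixes q :: "'a::euclidean_space \<Rightarrow> real"
  assumes L: "closed L" "\<And>v c. v \<in> L \<Longrightarrow> c *\<^sub>R v \<in> L"
    and cont: "continuous_on L q" and hom: "\<And>v c. q (c *\<^sub>R v) = c\<^sup>2 * q v"
    and pos: "\<And>v. v \<in> L \<Longrightarrow> v \<noteq> 0 \<Longrightarrow> 0 < q v"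
  obtains c where "0 < c" "\<And>v. v \<in> L \<Longrightarrow> c * (norm v)\<^sup>2 \<le> q v"
proof (cases "L \<inter> sphere 0 1 = {}")
  case True
  have zero: "v = 0" if "v \<in> L" for v
    using True L(2)[OF that, of "inverse (norm v)"] by (cases "v = 0") auto
  show ?thesis
  proof (rule that[of 1])
    fix v assume "v \<in> L"
    then have "v = 0" by (rule zero)
    then show "1 * (norm v)\<^sup>2 \<le> q v" using hom[of 0 0] by simp
  qed simp
next
  case False
  have "compact (L \<inter> sphere 0 1)" using L(1) by (intro closed_Int_compact) auto
  then obtain u where u: "u \<in> L \<inter> sphere 0 1" "\<And>v. v \<in> L \<inter> sphere 0 1 \<Longrightarrow> q u \<le> q v"
    using continuous_attains_inf[OF _ False continuous_on_subset[OF cont]] by blast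
  show ?thesis
  proof (rule that[of "q u"])
    show "0 < q u" using u(1) by (intro pos) auto
    fix v assume v: "v \<in> L"
    show "q u * (norm v)\<^sup>2 \<le> q v"
    proof (cases "v = 0")
      case False
      have "q u \<le> q (inverse (norm v) *\<^sub>R v)" using v False by (intro u(2)) (auto intro: L(2))
      also have "\<dots> = q v / (norm v)\<^sup>2" by (simp add: hom power_inverse divide_inverse)
      finally show ?thesis using False by (simp add: field_simps)
    qed (use hom[of 0 0] in simp)
  qed
qed

locale lda_likelihood =
  fixes \<phi> :: "'k::finite \<Rightarrow> 'v::finite \<Rightarrow> real" and p :: "'v \<Rightarrow> real" and \<theta>s :: "'k \<Rightarrow> real"
  assumes phi_simplex: "\<And>k. (\<lambda>v. \<phi> k v) \<in> prob_simplex"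
    and phi_pos: "\<And>k v. 0 < \<phi> k v"
    and p_simplex: "p \<in> prob_simplex"
    and ts_simplex: "\<theta>s \<in> prob_simplex"
    and ts_pos: "\<And>k. 0 < \<theta>s k"
    and unique_max: "\<And>\<theta>. \<theta> \<in> prob_simplex \<Longrightarrow> \<theta> \<noteq> \<theta>s \<Longrightarrow> lda_H \<phi> p \<theta> < lda_H \<phi> p \<theta>s"
    and neg_def: "\<And>d :: 'k \<Rightarrow> real. (\<exists>k. d k \<noteq> 0) \<Longrightarrow> (\<Sum>k\<in>UNIV. d k) = 0 \<Longrightarrow>
                    (\<Sum>i\<in>UNIV. \<Sum>j\<in>UNIV. d i * hessian (lda_H \<phi> p) \<theta>s i j * d j) < 0"
begin

definition mix :: "'v \<Rightarrow> real" where
  "mix v = (\<Sum>k\<in>UNIV. \<theta>s k * \<phi> k v)"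

definition hess :: "'k \<Rightarrow> 'k \<Rightarrow> real" where
  "hess i j = - (\<Sum>v\<in>UNIV. p v * \<phi> i v * \<phi> j v / (mix v)\<^sup>2)"

lemma phi_le_one: "\<phi> k v \<le> 1"
  using simplex_le_one[OF phi_simplex] by simp

lemma p_nonneg: "0 \<le> p v"
  using p_simplex by (simp add: prob_simplex_def)

lemma p_sum: "(\<Sum>v\<in>UNIV. p v) = 1"
  using p_simplex by (simp add: prob_simplex_def)

lemma ts_sum: "(\<Sum>k\<in>UNIV. \<theta>s k) = 1"
  using ts_simplex by (simp add: prob_simplex_def)

lemma mixture_pos: "\<theta> \<in> prob_simplex \<Longrightarrow> 0 < (\<Sum>k\<in>UNIV. \<theta> k * \<phi> k v)"
proof -
  assume \<theta>: "\<theta> \<in> prob_simplex"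
  then obtain k where "\<theta> k \<noteq> 0" by (force simp: prob_simplex_def)
  moreover have "0 \<le> \<theta> k" using \<theta> by (simp add: prob_simplex_def)
  ultimately have "0 < \<theta> k" by simp
  then show ?thesis
    using \<theta> phi_pos by (intro sum_pos2[of UNIV k]) (auto simp: prob_simplex_def less_imp_le)
qed

lemma mixture_le_one: "\<theta> \<in> prob_simplex \<Longrightarrow> (\<Sum>k\<in>UNIV. \<theta> k * \<phi> k v) \<le> 1"
proof -
  assume \<theta>: "\<theta> \<in> prob_simplex"
  then have "(\<Sum>k\<in>UNIV. \<theta> k * \<phi> k v) \<le> (\<Sum>k\<in>UNIV. \<theta> k * 1)"
    by (intro sum_mono mult_left_mono) (auto simp: phi_le_one prob_simplex_def)
  then show ?thesis using \<theta> by (simp add: prob_simplex_def)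
qed

lemma mix_pos: "0 < mix v"
  unfolding mix_def by (rule mixture_pos[OF ts_simplex])

lemma lda_H_shift:
  "lda_H \<phi> p (\<lambda>k. \<theta>s k + d k) = (\<Sum>v\<in>UNIV. p v * ln (mix v + (\<Sum>k\<in>UNIV. d k * \<phi> k v)))"
  unfolding lda_H_def mix_def by (simp add: distrib_right sum.distrib)

lemma has_real_derivative_sum_ln_affine:
  assumes "\<And>v. 0 < a v + t * c v"
  shows "((\<lambda>t. \<Sum>v\<in>UNIV. p v * ln (a v + t * c v)) has_real_derivative
           (\<Sum>v\<in>UNIV. p v * (c v / (a v + t * c v)))) (at t)"
  by (rule DERIV_sum) (auto intro!: derivative_eq_intros simp: assms field_simps)

text \<open>First-order optimality of the interior maximiser \<open>\<theta>s\<close> on the simplex: all partial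
  derivatives of \<open>H\<close> at \<open>\<theta>s\<close> coincide, and their \<open>\<theta>s\<close>-weighted mean is \<open>\<Sum> p = 1\<close>.\<close>
lemma score_const: "(\<Sum>v\<in>UNIV. p v * \<phi> i v / mix v) = (\<Sum>v\<in>UNIV. p v * \<phi> j v / mix v)"
proof -
  define e where "e k = (if k = i then 1 else 0) - (if k = j then 1 else 0 :: real)" for k
  define c where "c v = \<phi> i v - \<phi> j v" for v
  have c: "(\<Sum>k\<in>UNIV. (t * e k) * \<phi> k v) = t * c v" for t v
  proof -
    have "(\<Sum>k\<in>UNIV. e k * \<phi> k v) = c v"
      by (simp add: e_def c_def left_diff_distrib sum_subtractf if_distrib[of "\<lambda>x. x * _"] cong: if_cong)
    then show ?thesis by (simp add: sum_distrib_left[symmetric] mult.assoc)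
  qed
  define m where "m = Min (range \<theta>s)"
  have m: "0 < m" "\<And>k. m \<le> \<theta>s k" unfolding m_def using ts_pos by auto
  have "(\<Sum>v\<in>UNIV. p v * (c v / (mix v + 0 * c v))) = 0"
  proof (rule DERIV_local_max[OF has_real_derivative_sum_ln_affine m(1)])
    show "0 < mix v + 0 * c v" for v by (simp add: mix_pos)
    show "\<forall>t. \<bar>0 - t\<bar> < m \<longrightarrow> (\<Sum>v\<in>UNIV. p v * ln (mix v + t * c v)) \<le> (\<Sum>v\<in>UNIV. p v * ln (mix v + 0 * c v))"
    proof (intro allI impI)
      fix t :: real assume t: "\<bar>0 - t\<bar> < m"
      have "\<bar>t * e k\<bar> \<le> \<bar>t\<bar>" for k by (auto simp: e_def abs_mult)
      then have "0 \<le> \<theta>s k + t * e k" for k using t m(2)[of k] by (smt (verit))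
      moreover have "(\<Sum>k\<in>UNIV. \<theta>s k + t * e k) = 1"
        by (simp add: sum.distrib ts_sum sum_distrib_left[symmetric] e_def sum_subtractf)
      ultimately have "(\<lambda>k. \<theta>s k + t * e k) \<in> prob_simplex" by (simp add: prob_simplex_def)
      then have "lda_H \<phi> p (\<lambda>k. \<theta>s k + t * e k) \<le> lda_H \<phi> p \<theta>s"
        using unique_max by (cases "(\<lambda>k. \<theta>s k + t * e k) = \<theta>s") (auto intro: less_imp_le)
      then show "(\<Sum>v\<in>UNIV. p v * ln (mix v + t * c v)) \<le> (\<Sum>v\<in>UNIV. p v * ln (mix v + 0 * c v))"
        using lda_H_shift[of "\<lambda>k. t * e k"] lda_H_shift[of "\<lambda>k. 0"] by (simp add: c)
    qed
  qed
  then show ?thesis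
    by (simp add: c_def diff_divide_distrib right_diff_distrib sum_subtractf)
qed

lemma score_eq_one: "(\<Sum>v\<in>UNIV. p v * \<phi> k v / mix v) = 1"
proof -
  have "(\<Sum>i\<in>UNIV. \<theta>s i * (\<Sum>v\<in>UNIV. p v * \<phi> i v / mix v))
      = (\<Sum>v\<in>UNIV. \<Sum>i\<in>UNIV. \<theta>s i * (p v * \<phi> i v / mix v))"
    unfolding sum_distrib_left by (rule sum.swap)
  also have "\<dots> = (\<Sum>v\<in>UNIV. (p v / mix v) * (\<Sum>i\<in>UNIV. \<theta>s i * \<phi> i v))"
    by (simp add: sum_distrib_left mult_ac)
  also have "\<dots> = 1" using mix_pos by (simp add: mix_def[symmetric] p_sum less_imp_neq[symmetric])
  finally have "(\<Sum>i\<in>UNIV. \<theta>s i * (\<Sum>v\<in>UNIV. p v * \<phi> i v / mix v)) = 1" .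
  moreover have "(\<Sum>i\<in>UNIV. \<theta>s i * (\<Sum>v\<in>UNIV. p v * \<phi> i v / mix v))
      = (\<Sum>i\<in>UNIV. \<theta>s i * (\<Sum>v\<in>UNIV. p v * \<phi> k v / mix v))"
    by (intro sum.cong refl) (metis score_const)
  ultimately show ?thesis by (simp add: ts_sum flip: sum_distrib_right)
qed

lemma lda_H_two_directions:
  "lda_H \<phi> p (\<lambda>l. \<theta>s l + a * (if l = i then 1 else 0) + t * (if l = j then 1 else 0))
     = (\<Sum>v\<in>UNIV. p v * ln ((mix v + t * \<phi> j v) + a * \<phi> i v))"
proof -
  have delta: "(\<Sum>k\<in>UNIV. c * (if k = i' then 1 else 0) * \<phi> k v) = c * \<phi> i' v" for c i' v
    by (simp add: if_distrib[of "\<lambda>x. _ * x"] if_distrib[of "\<lambda>x. x * _"] cong: if_cong)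
  have "lda_H \<phi> p (\<lambda>l. \<theta>s l + a * (if l = i then 1 else 0) + t * (if l = j then 1 else 0))
      = lda_H \<phi> p (\<lambda>l. \<theta>s l + (a * (if l = i then 1 else 0) + t * (if l = j then 1 else 0)))"
    by (simp add: add.assoc)
  also have "\<dots> = (\<Sum>v\<in>UNIV. p v * ln (mix v + (\<Sum>k\<in>UNIV. (a * (if k = i then 1 else 0)
                                                           + t * (if k = j then 1 else 0)) * \<phi> k v)))"
    by (rule lda_H_shift)
  finally show ?thesis by (simp only: distrib_right sum.distrib delta add_ac)
qed

lemma deriv_lda_H_direction:
  assumes t: "\<bar>t\<bar> < Min (range mix)"
  shows "deriv (\<lambda>a. lda_H \<phi> p (\<lambda>l. \<theta>s l + a * (if l = i then 1 else 0) + t * (if l = j then 1 else 0))) 0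
           = (\<Sum>v\<in>UNIV. p v * (\<phi> i v / (mix v + t * \<phi> j v)))"
proof -
  have "0 < mix v + t * \<phi> j v" for v
  proof -
    have "\<bar>t * \<phi> j v\<bar> \<le> \<bar>t\<bar>"
      using phi_le_one[of j v] phi_pos[of j v] by (simp add: abs_mult mult_left_le)
    moreover have "Min (range mix) \<le> mix v" by simp
    ultimately show ?thesis using t by linarith
  qed
  then have "((\<lambda>a. \<Sum>v\<in>UNIV. p v * ln ((mix v + t * \<phi> j v) + a * \<phi> i v)) has_real_derivative
               (\<Sum>v\<in>UNIV. p v * (\<phi> i v / (mix v + t * \<phi> j v)))) (at 0)"
    using has_real_derivative_sum_ln_affine[of "\<lambda>v. mix v + t * \<phi> j v" 0 "\<lambda>v. \<phi> i v"] by simp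
  then show ?thesis unfolding lda_H_two_directions by (rule DERIV_imp_deriv)
qed

lemma hessian_eq: "hessian (lda_H \<phi> p) \<theta>s i j = hess i j"
proof -
  define G where "G t = (\<Sum>v\<in>UNIV. p v * (\<phi> i v / (mix v + t * \<phi> j v)))" for t
  have "0 < Min (range mix)" using mix_pos by auto
  then have "\<forall>\<^sub>F t in nhds 0.
      deriv (\<lambda>a. lda_H \<phi> p (\<lambda>l. \<theta>s l + a * (if l = i then 1 else 0) + t * (if l = j then 1 else 0))) 0 = G t"
    using eventually_nhds_in_open[of "ball 0 (Min (range mix))" 0]
    by (auto elim!: eventually_mono simp: G_def deriv_lda_H_direction dist_real_def)
  moreover have "(G has_real_derivative hess i j) (at 0)"
  proof -
    have "(G has_real_derivative (\<Sum>v\<in>UNIV. p v * (- (\<phi> i v * \<phi> j v) / (mix v + 0 * \<phi> j v)\<^sup>2))) (at 0)"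
      unfolding G_def using mix_pos
      by (intro DERIV_sum) (auto intro!: derivative_eq_intros simp: field_simps power2_eq_square
          less_imp_neq[symmetric])
    then show ?thesis by (simp add: hess_def sum_negf[symmetric] mult.assoc)
  qed
  ultimately show ?thesis
    unfolding hessian_def by (intro DERIV_imp_deriv) (subst DERIV_cong_ev[OF refl _ refl])
qed

lemma hess_sym: "hess i j = hess j i"
  unfolding hess_def by (simp add: mult_ac)

definition rel_dev :: "('k \<Rightarrow> real) \<Rightarrow> 'v \<Rightarrow> real" where
  "rel_dev d v = (\<Sum>k\<in>UNIV. d k * \<phi> k v) / mix v"

definition quadQ :: "('k \<Rightarrow> real) \<Rightarrow> real" where
  "quadQ d = (\<Sum>v\<in>UNIV. p v * (rel_dev d v)\<^sup>2)"

definition quadR :: "('k \<Rightarrow> real) \<Rightarrow> real" where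
  "quadR d = (\<Sum>k\<in>UNIV. (d k)\<^sup>2 / \<theta>s k)"

lemma quadQ_eq_hess: "quadQ d = - (\<Sum>i\<in>UNIV. \<Sum>j\<in>UNIV. d i * hess i j * d j)"
proof -
  have "quadQ d = (\<Sum>v\<in>UNIV. \<Sum>i\<in>UNIV. \<Sum>j\<in>UNIV. d i * (p v * \<phi> i v * \<phi> j v / (mix v)\<^sup>2) * d j)"
    unfolding quadQ_def rel_dev_def
    by (intro sum.cong refl) (simp add: power2_eq_square sum_product sum_distrib_left sum_divide_distrib mult_ac)
  also have "\<dots> = (\<Sum>i\<in>UNIV. \<Sum>j\<in>UNIV. \<Sum>v\<in>UNIV. d i * (p v * \<phi> i v * \<phi> j v / (mix v)\<^sup>2) * d j)"
    by (subst sum.swap) (intro sum.cong refl, rule sum.swap)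
  also have "\<dots> = - (\<Sum>i\<in>UNIV. \<Sum>j\<in>UNIV. d i * hess i j * d j)"
    unfolding hess_def by (simp add: sum_distrib_left sum_distrib_right sum_negf[symmetric])
  finally show ?thesis .
qed

lemma quadQ_pos: "(\<exists>k. d k \<noteq> 0) \<Longrightarrow> (\<Sum>k\<in>UNIV. d k) = 0 \<Longrightarrow> 0 < quadQ d"
  using neg_def[of d] unfolding quadQ_eq_hess hessian_eq by simp

lemma quadR_pos: "(\<exists>k. d k \<noteq> 0) \<Longrightarrow> 0 < quadR d"
proof -
  assume "\<exists>k. d k \<noteq> 0"
  then obtain k where "d k \<noteq> 0" by blast
  then have "0 < (d k)\<^sup>2 / \<theta>s k" using ts_pos[of k] by simp
  also have "\<dots> \<le> quadR d"
    unfolding quadR_def using ts_pos by (intro member_le_sum) (auto intro!: divide_nonneg_pos)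
  finally show ?thesis .
qed

lemma quadQ_coercive:
  obtains c where "0 < c" "\<And>d. (\<Sum>k\<in>UNIV. d k) = 0 \<Longrightarrow> c * (\<Sum>k\<in>UNIV. (d k)\<^sup>2) \<le> quadQ d"
proof -
  have cont: "continuous_on A (\<lambda>x::real^'k. quadQ (\<lambda>k. x $ k))" for A
    unfolding quadQ_def rel_dev_def using mix_pos
    by (intro continuous_intros) (auto simp: less_imp_neq[symmetric])
  have hom: "quadQ (\<lambda>k. (c *\<^sub>R x) $ k) = c\<^sup>2 * quadQ (\<lambda>k. x $ k)" for c and x :: "real^'k"
  proof -
    have eq: "(\<lambda>k. (c *\<^sub>R x) $ k) = (\<lambda>k. c * x $ k)" by auto
    have "rel_dev (\<lambda>k. c * x $ k) v = c * rel_dev (\<lambda>k. x $ k) v" for v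
      by (simp add: rel_dev_def sum_distrib_left mult.assoc)
    then show ?thesis
      unfolding quadQ_def eq by (simp add: power_mult_distrib sum_distrib_left mult.left_commute)
  qed
  have norm2: "(norm x)\<^sup>2 = (\<Sum>k\<in>UNIV. (x $ k)\<^sup>2)" for x :: "real^'k"
    unfolding power2_norm_eq_inner by (simp add: inner_vec_def power2_eq_square)
  obtain c where c: "0 < c" "\<And>x. x \<in> {x::real^'k. (\<Sum>k\<in>UNIV. x $ k) = 0} \<Longrightarrow> c * (norm x)\<^sup>2 \<le> quadQ (\<lambda>k. x $ k)"
  proof (rule quadratic_coercive[OF _ _ cont hom])
    show "closed {x::real^'k. (\<Sum>k\<in>UNIV. x $ k) = 0}"
      by (intro closed_Collect_eq continuous_intros)
    show "c *\<^sub>R x \<in> {x. (\<Sum>k\<in>UNIV. x $ k) = 0}" if "x \<in> {x. (\<Sum>k\<in>UNIV. x $ k) = 0}" for c x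
      using that by (simp add: scaleR_sum_right[symmetric])
    show "0 < quadQ (\<lambda>k. x $ k)" if "x \<in> {x. (\<Sum>k\<in>UNIV. x $ k) = 0}" "x \<noteq> 0" for x
      using that by (intro quadQ_pos) (auto simp: vec_eq_iff)
  qed blast
  show ?thesis
  proof (rule that[OF c(1)])
    fix d :: "'k \<Rightarrow> real" assume "(\<Sum>k\<in>UNIV. d k) = 0"
    then show "c * (\<Sum>k\<in>UNIV. (d k)\<^sup>2) \<le> quadQ d"
      using c(2)[of "\<chi> k. d k"] by (simp add: norm2)
  qed
qed

lemma sum_p_rel_dev: "(\<Sum>k\<in>UNIV. d k) = 0 \<Longrightarrow> (\<Sum>v\<in>UNIV. p v * rel_dev d v) = 0"
proof -
  assume d0: "(\<Sum>k\<in>UNIV. d k) = 0"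
  have "(\<Sum>v\<in>UNIV. p v * rel_dev d v) = (\<Sum>v\<in>UNIV. \<Sum>k\<in>UNIV. d k * (p v * \<phi> k v / mix v))"
    unfolding rel_dev_def by (simp add: sum_distrib_left sum_divide_distrib mult.left_commute)
  also have "\<dots> = (\<Sum>k\<in>UNIV. d k * (\<Sum>v\<in>UNIV. p v * \<phi> k v / mix v))"
    by (subst sum.swap) (simp add: sum_distrib_left)
  also have "\<dots> = 0" using d0 by (simp add: score_eq_one)
  finally show ?thesis .
qed

lemma lda_H_shift_eq:
  assumes d0: "(\<Sum>k\<in>UNIV. d k) = 0" and pos: "\<And>v. 0 < mix v + (\<Sum>k\<in>UNIV. d k * \<phi> k v)"
  shows "lda_H \<phi> p (\<lambda>k. \<theta>s k + d k) - lda_H \<phi> p \<theta>s = (\<Sum>v\<in>UNIV. p v * ln_remainder (rel_dev d v))"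
proof -
  have "mix v + (\<Sum>k\<in>UNIV. d k * \<phi> k v) = mix v * (1 + rel_dev d v)" for v
    using mix_pos[of v] by (simp add: rel_dev_def field_simps)
  then have "ln (mix v + (\<Sum>k\<in>UNIV. d k * \<phi> k v)) = ln (mix v) + ln (1 + rel_dev d v)" for v
    using pos[of v] mix_pos[of v] by (simp add: ln_mult zero_less_mult_iff)
  then have "lda_H \<phi> p (\<lambda>k. \<theta>s k + d k) - lda_H \<phi> p \<theta>s = (\<Sum>v\<in>UNIV. p v * ln (1 + rel_dev d v))"
    using lda_H_shift[of d] lda_H_shift[of "\<lambda>_. 0"] by (simp add: distrib_left sum.distrib)
  also have "\<dots> = (\<Sum>v\<in>UNIV. p v * ln_remainder (rel_dev d v)) + (\<Sum>v\<in>UNIV. p v * rel_dev d v)"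
    by (simp add: ln_remainder_def right_diff_distrib sum_subtractf)
  finally show ?thesis using sum_p_rel_dev[OF d0] by simp
qed

lemma KL_shift_eq:
  assumes d0: "(\<Sum>k\<in>UNIV. d k) = 0" and pos: "\<And>k. 0 < \<theta>s k + d k"
  shows "- KL \<theta>s (\<lambda>k. \<theta>s k + d k) = (\<Sum>k\<in>UNIV. \<theta>s k * ln_remainder (d k / \<theta>s k))"
proof -
  have "- (\<theta>s k * ln (\<theta>s k / (\<theta>s k + d k))) = \<theta>s k * ln_remainder (d k / \<theta>s k) + d k" for k
  proof -
    have "1 + d k / \<theta>s k = (\<theta>s k + d k) / \<theta>s k" using ts_pos[of k] by (simp add: field_simps)
    then show ?thesis
      using ts_pos[of k] pos[of k] by (simp add: ln_remainder_def ln_div algebra_simps)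
  qed
  then have "- KL \<theta>s (\<lambda>k. \<theta>s k + d k) = (\<Sum>k\<in>UNIV. \<theta>s k * ln_remainder (d k / \<theta>s k)) + (\<Sum>k\<in>UNIV. d k)"
    unfolding KL_def by (simp add: sum_negf[symmetric] sum.distrib)
  then show ?thesis using d0 by simp
qed

text \<open>On the simplex the relative deviations are bounded above, which turns the
  concavity bound of \<open>ln_remainder\<close> into a global Gaussian bound.\<close>
lemma lda_H_shift_le:
  assumes \<theta>: "(\<lambda>k. \<theta>s k + d k) \<in> prob_simplex" and d0: "(\<Sum>k\<in>UNIV. d k) = 0"
  shows "lda_H \<phi> p (\<lambda>k. \<theta>s k + d k) - lda_H \<phi> p \<theta>s \<le> - quadQ d / (2 * (1 + 1 / Min (range mix)))"
proof -
  define U where "U = 1 / Min (range mix)"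
  have m: "0 < Min (range mix)" "Min (range mix) \<le> mix v" for v using mix_pos by auto
  have U: "0 \<le> U" "1 / mix v \<le> U" for v
    unfolding U_def
    by (rule divide_nonneg_pos[OF zero_le_one m(1)])
       (rule divide_left_mono[OF m(2) zero_le_one mult_pos_pos[OF mix_pos m(1)]])
  have mixture: "mix v + (\<Sum>k\<in>UNIV. d k * \<phi> k v) = (\<Sum>k\<in>UNIV. (\<theta>s k + d k) * \<phi> k v)" for v
    by (simp add: mix_def distrib_right sum.distrib)
  have one_plus: "1 + rel_dev d v = (\<Sum>k\<in>UNIV. (\<theta>s k + d k) * \<phi> k v) / mix v" for v
    using mix_pos[of v] unfolding mixture[symmetric] by (simp add: rel_dev_def field_simps)
  have lower: "-1 < rel_dev d v" for v
    using one_plus[of v] mixture_pos[OF \<theta>, of v] mix_pos[of v] by (smt (verit) divide_pos_pos)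
  have upper: "rel_dev d v \<le> U" for v
    using one_plus[of v] mixture_le_one[OF \<theta>, of v] mix_pos[of v] U(2)[of v]
    by (smt (verit) divide_right_mono)
  have "lda_H \<phi> p (\<lambda>k. \<theta>s k + d k) - lda_H \<phi> p \<theta>s = (\<Sum>v\<in>UNIV. p v * ln_remainder (rel_dev d v))"
    using mixture_pos[OF \<theta>] by (intro lda_H_shift_eq[OF d0]) (simp add: mixture)
  also have "\<dots> \<le> (\<Sum>v\<in>UNIV. p v * (- (rel_dev d v)\<^sup>2 / (2 * (1 + U))))"
    by (intro sum_mono mult_left_mono ln_remainder_le U(1) lower upper p_nonneg)
  also have "\<dots> = - quadQ d / (2 * (1 + U))"
    unfolding quadQ_def by (simp add: sum_divide_distrib sum_negf)
  finally show ?thesis by (simp add: U_def)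
qed

lemma neg_KL_shift_le:
  assumes \<theta>: "(\<lambda>k. \<theta>s k + d k) \<in> prob_simplex" and pos: "\<And>k. 0 < \<theta>s k + d k"
    and d0: "(\<Sum>k\<in>UNIV. d k) = 0"
  shows "- KL \<theta>s (\<lambda>k. \<theta>s k + d k) \<le> - quadR d / (2 * (1 + 1 / Min (range \<theta>s)))"
proof -
  define U where "U = 1 / Min (range \<theta>s)"
  have m: "0 < Min (range \<theta>s)" "Min (range \<theta>s) \<le> \<theta>s k" for k using ts_pos by auto
  have U: "0 \<le> U" "1 / \<theta>s k \<le> U" for k
    unfolding U_def
    by (rule divide_nonneg_pos[OF zero_le_one m(1)])
       (rule divide_left_mono[OF m(2) zero_le_one mult_pos_pos[OF ts_pos m(1)]])
  have one_plus: "1 + d k / \<theta>s k = (\<theta>s k + d k) / \<theta>s k" for k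
    using ts_pos[of k] by (simp add: field_simps)
  have lower: "-1 < d k / \<theta>s k" for k
    using one_plus[of k] pos[of k] ts_pos[of k] by (smt (verit) divide_pos_pos)
  have upper: "d k / \<theta>s k \<le> U" for k
    using one_plus[of k] simplex_le_one[OF \<theta>, of k] ts_pos[of k] U(2)[of k]
    by (smt (verit) divide_right_mono)
  have "- KL \<theta>s (\<lambda>k. \<theta>s k + d k) = (\<Sum>k\<in>UNIV. \<theta>s k * ln_remainder (d k / \<theta>s k))"
    by (rule KL_shift_eq[OF d0 pos])
  also have "\<dots> \<le> (\<Sum>k\<in>UNIV. \<theta>s k * (- (d k / \<theta>s k)\<^sup>2 / (2 * (1 + U))))"
    by (intro sum_mono mult_left_mono ln_remainder_le U(1) lower upper less_imp_le[OF ts_pos])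
  also have "\<dots> = - quadR d / (2 * (1 + U))"
    unfolding quadR_def using ts_pos
    by (simp add: sum_divide_distrib sum_negf power_divide power2_eq_square less_imp_neq[symmetric])
  finally show ?thesis by (simp add: U_def)
qed

definition lik_ratio :: "('k \<Rightarrow> real) \<Rightarrow> real" where
  "lik_ratio x = exp (lda_H \<phi> p (lift_simplex x) - lda_H \<phi> p \<theta>s)"

definition kl_ratio :: "('k \<Rightarrow> real) \<Rightarrow> real" where
  "kl_ratio x = (if \<forall>k. 0 < lift_simplex x k then exp (- KL \<theta>s (lift_simplex x)) else 0)"

lemma measurable_lik_ratio [measurable]: "lik_ratio \<in> borel_measurable (PiM free_coords (\<lambda>_. lborel))"
proof -
  have "lda_H \<phi> p \<in> borel_measurable (PiM UNIV (\<lambda>_. lborel))"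
    unfolding lda_H_def[abs_def] by measurable
  then show ?thesis unfolding lik_ratio_def[abs_def] by measurable
qed

lemma measurable_kl_ratio [measurable]: "kl_ratio \<in> borel_measurable (PiM free_coords (\<lambda>_. lborel))"
proof -
  have "(\<lambda>\<theta>. if \<forall>k. 0 < \<theta> k then exp (- KL \<theta>s \<theta>) else 0) \<in> borel_measurable (PiM UNIV (\<lambda>_. lborel))"
    unfolding KL_def by measurable
  then show ?thesis unfolding kl_ratio_def[abs_def] by measurable
qed

lemma lik_ratio_nonneg: "0 \<le> lik_ratio x"
  by (simp add: lik_ratio_def)

lemma kl_ratio_nonneg: "0 \<le> kl_ratio x"
  by (simp add: kl_ratio_def)

lemma lift_simplex_ts: "lift_simplex x = (\<lambda>k. \<theta>s k + lift_tangent (\<lambda>j. x j - \<theta>s j) k)"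
  by (rule lift_simplex_eq[OF ts_sum])

lemma lik_ratio_le_gaussian:
  obtains c where "0 < c"
    "\<And>x. lift_simplex x \<in> prob_simplex \<Longrightarrow> lik_ratio x \<le> exp (- c * (\<Sum>j\<in>free_coords. (x j - \<theta>s j)\<^sup>2))"
proof -
  obtain c0 where c0: "0 < c0" "\<And>d. (\<Sum>k\<in>UNIV. d k) = 0 \<Longrightarrow> c0 * (\<Sum>k\<in>UNIV. (d k)\<^sup>2) \<le> quadQ d"
    using quadQ_coercive by blast
  define m where "m = Min (range mix)"
  have "0 < m" unfolding m_def using mix_pos by auto
  define C where "C = 2 * (1 + 1 / m)"
  have C: "0 < C" unfolding C_def using \<open>0 < m\<close> by (simp add: add_pos_pos)
  show ?thesis
  proof (rule that[of "c0 / C"])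
    show "0 < c0 / C" using c0(1) C by simp
    fix x :: "'k \<Rightarrow> real" assume x: "lift_simplex x \<in> prob_simplex"
    define d where "d = lift_tangent (\<lambda>j. x j - \<theta>s j)"
    have "lda_H \<phi> p (lift_simplex x) - lda_H \<phi> p \<theta>s \<le> - quadQ d / C"
      using x lda_H_shift_le[of d] by (simp add: sum_lift_tangent d_def C_def m_def lift_simplex_ts[of x])
    also have "\<dots> \<le> - (c0 * (\<Sum>k\<in>UNIV. (d k)\<^sup>2)) / C"
      using c0(2)[of d] C by (simp add: d_def sum_lift_tangent divide_right_mono)
    also have "\<dots> \<le> - (c0 / C) * (\<Sum>j\<in>free_coords. (x j - \<theta>s j)\<^sup>2)"
      using sum_squares_le_lift_tangent[of "\<lambda>j. x j - \<theta>s j"] c0(1) C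
      by (simp add: d_def divide_right_mono)
    finally show "lik_ratio x \<le> exp (- (c0 / C) * (\<Sum>j\<in>free_coords. (x j - \<theta>s j)\<^sup>2))"
      by (simp add: lik_ratio_def)
  qed
qed

lemma kl_ratio_le_gaussian:
  obtains c where "0 < c"
    "\<And>x. lift_simplex x \<in> prob_simplex \<Longrightarrow> kl_ratio x \<le> exp (- c * (\<Sum>j\<in>free_coords. (x j - \<theta>s j)\<^sup>2))"
proof -
  define m where "m = Min (range \<theta>s)"
  have "0 < m" unfolding m_def using ts_pos by auto
  define C where "C = 2 * (1 + 1 / m)"
  have C: "0 < C" unfolding C_def using \<open>0 < m\<close> by (simp add: add_pos_pos)
  show ?thesis
  proof (rule that[of "1 / C"])
    show "0 < 1 / C" using C by simp
    fix x :: "'k \<Rightarrow> real" assume x: "lift_simplex x \<in> prob_simplex"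
    define d where "d = lift_tangent (\<lambda>j. x j - \<theta>s j)"
    show "kl_ratio x \<le> exp (- (1 / C) * (\<Sum>j\<in>free_coords. (x j - \<theta>s j)\<^sup>2))"
    proof (cases "\<forall>k. 0 < lift_simplex x k")
      case True
      have "(d k)\<^sup>2 \<le> (d k)\<^sup>2 / \<theta>s k" for k
        using ts_pos[of k] simplex_le_one[OF ts_simplex, of k] by (simp add: le_divide_eq mult_left_le)
      then have "(\<Sum>k\<in>UNIV. (d k)\<^sup>2) \<le> quadR d"
        unfolding quadR_def by (intro sum_mono)
      have "- KL \<theta>s (lift_simplex x) \<le> - quadR d / C"
        using x True neg_KL_shift_le[of d]
        by (simp add: sum_lift_tangent d_def C_def m_def lift_simplex_ts[of x])
      also have "\<dots> \<le> - (\<Sum>k\<in>UNIV. (d k)\<^sup>2) / C"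
        using \<open>(\<Sum>k\<in>UNIV. (d k)\<^sup>2) \<le> quadR d\<close> C by (simp add: divide_right_mono)
      also have "\<dots> \<le> - (1 / C) * (\<Sum>j\<in>free_coords. (x j - \<theta>s j)\<^sup>2)"
        using sum_squares_le_lift_tangent[of "\<lambda>j. x j - \<theta>s j"] C by (simp add: d_def divide_right_mono)
      finally show ?thesis using True by (simp add: kl_ratio_def)
    qed (auto simp: kl_ratio_def)
  qed
qed

lemma lik_ratio_shift_limit:
  "(\<lambda>n. lik_ratio (\<lambda>j\<in>free_coords. \<theta>s j + y j / sqrt n) ^ n) \<longlonglongrightarrow> exp (- quadQ (lift_tangent y) / 2)"
proof -
  define a where "a v = rel_dev (lift_tangent y) v" for v
  have "\<forall>\<^sub>F n in sequentially. \<forall>v. 0 < mix v + (\<Sum>k\<in>UNIV. lift_tangent y k * \<phi> k v) / sqrt n"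
    using mix_pos by (intro eventually_all_finite eventually_pos_add_divide_sqrt)
  then have "\<forall>\<^sub>F n in sequentially. exp (\<Sum>v\<in>UNIV. p v * (real n * ln_remainder (a v / sqrt n)))
      = lik_ratio (\<lambda>j\<in>free_coords. \<theta>s j + y j / sqrt n) ^ n"
  proof eventually_elim
    case (elim n)
    have "rel_dev (\<lambda>k. lift_tangent y k / sqrt n) v = a v / sqrt n" for v
      by (simp add: a_def rel_dev_def sum_divide_distrib[symmetric])
    moreover have "lda_H \<phi> p (\<lambda>k. \<theta>s k + lift_tangent y k / sqrt n) - lda_H \<phi> p \<theta>s
        = (\<Sum>v\<in>UNIV. p v * ln_remainder (rel_dev (\<lambda>k. lift_tangent y k / sqrt n) v))"
      using elim by (intro lda_H_shift_eq)
        (simp_all add: sum_divide_distrib[symmetric] sum_lift_tangent)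
    ultimately show ?case
      by (simp add: lik_ratio_def lift_simplex_shift[OF ts_sum] exp_of_nat_mult[symmetric]
          sum_distrib_left mult.left_commute)
  qed
  moreover have "(\<lambda>n. exp (\<Sum>v\<in>UNIV. p v * (real n * ln_remainder (a v / sqrt n))))
      \<longlonglongrightarrow> exp (\<Sum>v\<in>UNIV. p v * (- (a v)\<^sup>2 / 2))"
    by (intro tendsto_intros tendsto_ln_remainder_scaled)
  moreover have "(\<Sum>v\<in>UNIV. p v * (- (a v)\<^sup>2 / 2)) = - quadQ (lift_tangent y) / 2"
    by (simp add: quadQ_def a_def sum_divide_distrib sum_negf)
  ultimately show ?thesis by (simp add: Lim_transform_eventually)
qed

lemma kl_ratio_shift_limit:
  "(\<lambda>n. kl_ratio (\<lambda>j\<in>free_coords. \<theta>s j + y j / sqrt n) ^ n) \<longlonglongrightarrow> exp (- quadR (lift_tangent y) / 2)"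
proof -
  define b where "b k = lift_tangent y k / \<theta>s k" for k
  have "\<forall>\<^sub>F n in sequentially. \<forall>k. 0 < \<theta>s k + lift_tangent y k / sqrt n"
    using ts_pos by (intro eventually_all_finite eventually_pos_add_divide_sqrt)
  then have "\<forall>\<^sub>F n in sequentially. exp (\<Sum>k\<in>UNIV. \<theta>s k * (real n * ln_remainder (b k / sqrt n)))
      = kl_ratio (\<lambda>j\<in>free_coords. \<theta>s j + y j / sqrt n) ^ n"
  proof eventually_elim
    case (elim n)
    have "- KL \<theta>s (\<lambda>k. \<theta>s k + lift_tangent y k / sqrt n)
        = (\<Sum>k\<in>UNIV. \<theta>s k * ln_remainder ((lift_tangent y k / sqrt n) / \<theta>s k))"
      using elim by (intro KL_shift_eq) (simp_all add: sum_divide_distrib[symmetric] sum_lift_tangent)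
    also have "(\<lambda>k. (lift_tangent y k / sqrt n) / \<theta>s k) = (\<lambda>k. b k / sqrt n)"
      by (simp add: b_def mult.commute)
    finally show ?case
      using elim
      by (simp add: kl_ratio_def lift_simplex_shift[OF ts_sum] exp_of_nat_mult[symmetric]
          sum_distrib_left mult.left_commute)
  qed
  moreover have "(\<lambda>n. exp (\<Sum>k\<in>UNIV. \<theta>s k * (real n * ln_remainder (b k / sqrt n))))
      \<longlonglongrightarrow> exp (\<Sum>k\<in>UNIV. \<theta>s k * (- (b k)\<^sup>2 / 2))"
    by (intro tendsto_intros tendsto_ln_remainder_scaled)
  moreover have "(\<Sum>k\<in>UNIV. \<theta>s k * (- (b k)\<^sup>2 / 2)) = - quadR (lift_tangent y) / 2"
    using ts_pos
    by (simp add: quadR_def b_def sum_divide_distrib sum_negf power_divide power2_eq_square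
        less_imp_neq[symmetric])
  ultimately show ?thesis by (simp add: Lim_transform_eventually)
qed

end

section \<open>Asymptotics of the correlation\<close>

lemma pos_def_on_lincomb:
  assumes "pos_def_on J A" "pos_def_on J B" "0 \<le> a" "0 \<le> b" "0 < a + b"
  shows "pos_def_on J (\<lambda>i j. a * A i j + b * B i j)"
  unfolding pos_def_on_def
proof safe
  fix i j assume "i \<in> J" "j \<in> J"
  then show "a * A i j + b * B i j = a * A j i + b * B j i"
    using assms(1,2) by (simp add: pos_def_on_sym)
next
  fix y :: "_ \<Rightarrow> real" and i assume "i \<in> J" "y i \<noteq> 0"
  then have "0 < quad_form J A y" "0 < quad_form J B y"
    using assms(1,2) by (auto intro: pos_def_on_pos)
  moreover have "0 < a \<or> 0 < b" using assms(3-5) by linarith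
  ultimately have "0 < a * quad_form J A y \<or> 0 < b * quad_form J B y"
    "0 \<le> a * quad_form J A y" "0 \<le> b * quad_form J B y"
    using assms(3,4) by auto
  then show "0 < quad_form J (\<lambda>i j. a * A i j + b * B i j) y"
    unfolding quad_form_add quad_form_cmult by linarith
qed

lemma divide_sqrt_mult_cancel:
  fixes k x y z :: real
  assumes "0 < k"
  shows "(k * x) / sqrt ((k * y) * (k * z)) = x / sqrt (y * z)"
proof -
  have "sqrt ((k * y) * (k * z)) = k * sqrt (y * z)"
    using assms by (simp add: real_sqrt_mult mult_ac)
  then show ?thesis using assms by simp
qed

text \<open>Multiplying numerator and denominator by the scale \<open>s\<^sub>n\<close> of the moments makes the
  products of first moments negligible.\<close>
lemma tendsto_corr_scaled:
  fixes s A X Y B C :: "nat \<Rightarrow> real"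
  assumes s: "(\<lambda>n. inverse (s n)) \<longlonglongrightarrow> 0" "\<forall>\<^sub>F n in sequentially. 0 < s n"
    and A: "(\<lambda>n. s n * A n) \<longlonglongrightarrow> a" and X: "(\<lambda>n. s n * X n) \<longlonglongrightarrow> x" and Y: "(\<lambda>n. s n * Y n) \<longlonglongrightarrow> y"
    and B: "(\<lambda>n. s n * B n) \<longlonglongrightarrow> b" and C: "(\<lambda>n. s n * C n) \<longlonglongrightarrow> c" and bc: "0 < b" "0 < c"
  shows "(\<lambda>n. (A n - X n * Y n) / sqrt ((B n - (X n)\<^sup>2) * (C n - (Y n)\<^sup>2))) \<longlonglongrightarrow> a / sqrt (b * c)"
proof -
  define F where "F n = (s n * A n - (s n * X n) * (s n * Y n) * inverse (s n))
      / sqrt ((s n * B n - (s n * X n)\<^sup>2 * inverse (s n)) * (s n * C n - (s n * Y n)\<^sup>2 * inverse (s n)))" for n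
  have "F \<longlonglongrightarrow> (a - x * y * 0) / sqrt ((b - x\<^sup>2 * 0) * (c - y\<^sup>2 * 0))"
    unfolding F_def using bc by (intro tendsto_intros A X Y B C s(1)) auto
  moreover have "\<forall>\<^sub>F n in sequentially. F n = (A n - X n * Y n) / sqrt ((B n - (X n)\<^sup>2) * (C n - (Y n)\<^sup>2))"
    using s(2)
  proof eventually_elim
    case (elim n)
    have "F n = (s n * (A n - X n * Y n)) / sqrt ((s n * (B n - (X n)\<^sup>2)) * (s n * (C n - (Y n)\<^sup>2)))"
      unfolding F_def using elim by (simp add: algebra_simps power2_eq_square)
    then show ?case using elim by (simp add: divide_sqrt_mult_cancel)
  qed
  ultimately show ?thesis by (simp add: Lim_transform_eventually)
qed

lemma tendsto_inverse_sqrt_power: "0 < m \<Longrightarrow> (\<lambda>n. inverse (sqrt (real n) ^ m)) \<longlonglongrightarrow> 0"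
proof -
  assume "0 < m"
  have "(\<lambda>n. inverse (sqrt (real n)) ^ m) \<longlonglongrightarrow> 0 ^ m"
    by (intro tendsto_power) real_asymp
  then show ?thesis using \<open>0 < m\<close> by (simp add: power_inverse zero_power)
qed

context lda_likelihood
begin

definition formQ :: "'k \<Rightarrow> 'k \<Rightarrow> real" where
  "formQ = tangent_form (\<lambda>i j. - hess i j)"

definition formR :: "'k \<Rightarrow> 'k \<Rightarrow> real" where
  "formR = tangent_form (\<lambda>i j. if i = j then 1 / \<theta>s i else 0)"

lemma quadQ_lift_tangent: "quadQ (lift_tangent y) = quad_form free_coords formQ y"
  unfolding formQ_def quadQ_eq_hess quad_form_lift_tangent[symmetric]
  by (simp add: sum_negf[symmetric])

lemma quadR_lift_tangent: "quadR (lift_tangent y) = quad_form free_coords formR y"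
proof -
  have "lift_tangent y i * (if i = j then 1 / \<theta>s i else 0) * lift_tangent y j
      = (if j = i then (lift_tangent y i)\<^sup>2 / \<theta>s i else 0)" for i j
    by (simp add: power2_eq_square)
  then show ?thesis
    unfolding formR_def quad_form_lift_tangent[symmetric] quadR_def by simp
qed

lemma pos_def_formQ: "pos_def_on free_coords formQ"
  unfolding pos_def_on_def
proof safe
  show "formQ i j = formQ j i" for i j
    unfolding formQ_def tangent_form_def using hess_sym by simp
  fix y :: "'k \<Rightarrow> real" and i assume "i \<in> free_coords" "y i \<noteq> 0"
  then show "0 < quad_form free_coords formQ y"
    unfolding quadQ_lift_tangent[symmetric] by (intro quadQ_pos lift_tangent_nonzero sum_lift_tangent)
qed

lemma pos_def_formR: "pos_def_on free_coords formR"
  unfolding pos_def_on_def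
proof safe
  show "formR i j = formR j i" for i j
    unfolding formR_def tangent_form_def by simp
  fix y :: "'k \<Rightarrow> real" and i assume "i \<in> free_coords" "y i \<noteq> 0"
  then show "0 < quad_form free_coords formR y"
    unfolding quadR_lift_tangent[symmetric] by (intro quadR_pos lift_tangent_nonzero)
qed

lemma hess_ts: "(\<Sum>j\<in>UNIV. - hess i j * \<theta>s j) = 1"
proof -
  have "(\<Sum>j\<in>UNIV. - hess i j * \<theta>s j) = (\<Sum>j\<in>UNIV. \<Sum>v\<in>UNIV. \<theta>s j * (p v * \<phi> i v * \<phi> j v / (mix v)\<^sup>2))"
    unfolding hess_def by (simp add: sum_distrib_left sum_distrib_right mult.commute)
  also have "\<dots> = (\<Sum>v\<in>UNIV. \<Sum>j\<in>UNIV. \<theta>s j * (p v * \<phi> i v * \<phi> j v / (mix v)\<^sup>2))"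
    by (rule sum.swap)
  also have "\<dots> = (\<Sum>v\<in>UNIV. (p v * \<phi> i v / (mix v)\<^sup>2) * (\<Sum>j\<in>UNIV. \<theta>s j * \<phi> j v))"
    by (simp add: sum_distrib_left sum_divide_distrib mult.commute mult.left_commute)
  also have "\<dots> = (\<Sum>v\<in>UNIV. p v * \<phi> i v / mix v)"
    using mix_pos by (intro sum.cong refl) (simp add: mix_def[symmetric] power2_eq_square less_imp_neq[symmetric])
  finally show ?thesis by (simp add: score_eq_one)
qed

lemma det_neg_hess: "det (\<chi> i j. - hess i j :: real^'k^'k) = det_on free_coords formQ"
  using det_eq_tangent_form[of "\<lambda>i j. - hess i j" \<theta>s 1] hess_sym ts_sum hess_ts
  by (simp add: formQ_def)

lemma det_inverse_diag: "det (\<chi> i j. if i = j then 1 / \<theta>s i else 0 :: real^'k^'k) = det_on free_coords formR"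
proof -
  have "(\<Sum>j\<in>UNIV. (if i = j then 1 / \<theta>s i else 0) * \<theta>s j) = 1" for i
    using ts_pos[of i] by (simp add: if_distrib[of "\<lambda>x. x * _"] cong: if_cong)
  then show ?thesis
    using det_eq_tangent_form[of "\<lambda>i j. if i = j then 1 / \<theta>s i else 0" \<theta>s 1] ts_sum
    by (simp add: formR_def)
qed

lemma det_sum_forms:
  "det (\<chi> i j. - hess i j + (if i = j then 1 / \<theta>s i else 0) :: real^'k^'k)
     = 2 * det_on free_coords (\<lambda>i j. formQ i j + formR i j)"
proof -
  have "(\<Sum>j\<in>UNIV. (- hess i j + (if i = j then 1 / \<theta>s i else 0)) * \<theta>s j) = 2" for i
  proof -
    have "(\<Sum>j\<in>UNIV. hess i j * \<theta>s j) = - 1" using hess_ts[of i] by (simp add: sum_negf)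
    then show ?thesis
      using ts_pos[of i]
      by (simp add: left_diff_distrib sum_subtractf if_distrib[of "\<lambda>x. x * _"] cong: if_cong)
  qed
  moreover have "tangent_form (\<lambda>i j. - hess i j + (if i = j then 1 / \<theta>s i else 0))
      = (\<lambda>i j. formQ i j + formR i j)"
    by (auto simp: formQ_def formR_def tangent_form_def fun_eq_iff)
  ultimately show ?thesis
    using det_eq_tangent_form[of "\<lambda>i j. - hess i j + (if i = j then 1 / \<theta>s i else 0)" \<theta>s 2] ts_sum hess_sym
    by simp
qed

definition gauss_const :: "nat \<Rightarrow> nat \<Rightarrow> real" where
  "gauss_const a b = (2 * pi) powr (card (free_coords :: 'k set) / 2)
                     / sqrt (det_on free_coords (\<lambda>i j. real a * formQ i j + real b * formR i j))"

lemma pos_def_combination: "0 < a + b \<Longrightarrow> pos_def_on free_coords (\<lambda>i j. real a * formQ i j + real b * formR i j)"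
  by (intro pos_def_on_lincomb pos_def_formQ pos_def_formR) auto

lemma gauss_const_pos: "0 < a + b \<Longrightarrow> 0 < gauss_const a b"
  unfolding gauss_const_def using det_on_pos[OF pos_def_combination] by simp

lemma abs_det_hessian:
  "\<bar>det (\<chi> i j. hessian (lda_H \<phi> p) \<theta>s i j :: real^'k^'k)\<bar> = det_on free_coords formQ"
  using det_scale_rows[of "\<lambda>_. - 1" "\<chi> i j. - hess i j :: real^'k^'k"] det_on_pos[OF pos_def_formQ]
  by (simp add: hessian_eq det_neg_hess abs_mult)

lemma abs_det_neg_inverse_diag:
  "\<bar>det (\<chi> i j. if i = j then - 1 / \<theta>s i else 0 :: real^'k^'k)\<bar> = det_on free_coords formR"
proof -
  have "(\<chi> i j. if i = j then - 1 / \<theta>s i else 0 :: real^'k^'k)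
      = (\<chi> i j. (- 1) * (\<chi> i j. if i = j then 1 / \<theta>s i else 0 :: real^'k^'k) $ i $ j)"
    by (simp add: vec_eq_iff)
  then show ?thesis
    using det_on_pos[OF pos_def_formR] by (simp only: det_scale_rows det_inverse_diag) (simp add: abs_mult)
qed

lemma abs_det_half_sum:
  "\<bar>det ((1/2) *\<^sub>R ((\<chi> i j. hessian (lda_H \<phi> p) \<theta>s i j) + (\<chi> i j. if i = j then - 1 / \<theta>s i else 0))
         :: real^'k^'k)\<bar>
   = det_on free_coords (\<lambda>i j. formQ i j + formR i j) / 2 ^ card (free_coords :: 'k set)"
proof -
  have "(1/2) *\<^sub>R ((\<chi> i j. hessian (lda_H \<phi> p) \<theta>s i j) + (\<chi> i j. if i = j then - 1 / \<theta>s i else 0))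
      = (\<chi> i j. (- 1 / 2) * (\<chi> i j. - hess i j + (if i = j then 1 / \<theta>s i else 0) :: real^'k^'k) $ i $ j)"
    by (simp add: vec_eq_iff hessian_eq algebra_simps)
  moreover have "CARD('k) = Suc (card (free_coords :: 'k set))" by (simp add: card_free_coords)
  ultimately show ?thesis
    using det_on_pos[OF pos_def_on_add[OF pos_def_formQ pos_def_formR]]
    by (simp only: det_scale_rows det_sum_forms) (simp add: abs_mult power_abs power_divide)
qed

lemma gauss_const_ratio:
  "(gauss_const 1 1 / sqrt (gauss_const 2 0 * gauss_const 0 2))\<^sup>2
   = (let Q = (\<chi> i j. hessian (lda_H \<phi> p) \<theta>s i j) :: real^'k^'k;
          R = (\<chi> i j. if i = j then - 1 / \<theta>s i else 0) :: real^'k^'k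
      in sqrt \<bar>det Q\<bar> * sqrt \<bar>det R\<bar> / \<bar>det ((1/2) *\<^sub>R (Q + R))\<bar>)"
proof -
  define m where "m = card (free_coords :: 'k set)"
  define T where "T = (2 * pi) powr (m / 2)"
  define dQ dR dS where "dQ = det_on free_coords formQ" and "dR = det_on free_coords formR"
    and "dS = det_on free_coords (\<lambda>i j. formQ i j + formR i j)"
  have pos: "0 < dQ" "0 < dR" "0 < dS" "0 < T"
    unfolding dQ_def dR_def dS_def T_def
    using det_on_pos[OF pos_def_formQ] det_on_pos[OF pos_def_formR]
      det_on_pos[OF pos_def_on_add[OF pos_def_formQ pos_def_formR]] by auto
  have G: "gauss_const 1 1 = T / sqrt dS" "gauss_const 2 0 = T / sqrt (2 ^ m * dQ)"
    "gauss_const 0 2 = T / sqrt (2 ^ m * dR)"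
    by (simp_all add: gauss_const_def T_def m_def dQ_def dR_def dS_def det_on_cmult)
  have "(gauss_const 1 1 / sqrt (gauss_const 2 0 * gauss_const 0 2))\<^sup>2 = 2 ^ m * sqrt dQ * sqrt dR / dS"
    unfolding G using pos by (simp add: power_divide real_sqrt_mult real_sqrt_power field_simps power2_eq_square
        flip: power_mult_distrib)
  then show ?thesis
    unfolding Let_def abs_det_hessian abs_det_neg_inverse_diag abs_det_half_sum
    using pos by (simp add: dQ_def dR_def dS_def m_def field_simps)
qed

end

locale lda_dirichlet = lda_likelihood \<phi> p \<theta>s
  for \<phi> :: "'k::finite \<Rightarrow> 'v::finite \<Rightarrow> real" and p \<theta>s +
  fixes \<alpha> :: "'k \<Rightarrow> real"
  assumes alpha_pos: "\<And>k. 0 < \<alpha> k"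
begin

text \<open>\<open>moment a b n\<close> is \<open>E[X\<^sub>n\<^sup>a Y\<^sub>n\<^sup>b]\<close> divided by \<open>exp (n (a + b) H \<theta>s)\<close>, where \<open>X\<^sub>n = exp (n H)\<close>
  and \<open>Y\<^sub>n = exp_Hhat n (H \<theta>s) \<theta>s\<close>.\<close>
definition moment :: "nat \<Rightarrow> nat \<Rightarrow> nat \<Rightarrow> real" where
  "moment a b n = (\<integral>x. (lik_ratio x ^ a * kl_ratio x ^ b) ^ n * chart_density \<alpha> x \<partial>PiM free_coords (\<lambda>_. lborel))"

lemma power_ratios_le_gaussian:
  assumes ab: "0 < a + b"
  obtains c where "0 < c"
    "\<And>x. lift_simplex x \<in> prob_simplex
       \<Longrightarrow> lik_ratio x ^ a * kl_ratio x ^ b \<le> exp (- c * (\<Sum>j\<in>free_coords. (x j - \<theta>s j)\<^sup>2))"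
proof -
  obtain cQ where cQ: "0 < cQ"
    "\<And>x. lift_simplex x \<in> prob_simplex \<Longrightarrow> lik_ratio x \<le> exp (- cQ * (\<Sum>j\<in>free_coords. (x j - \<theta>s j)\<^sup>2))"
    using lik_ratio_le_gaussian by blast
  obtain cR where cR: "0 < cR"
    "\<And>x. lift_simplex x \<in> prob_simplex \<Longrightarrow> kl_ratio x \<le> exp (- cR * (\<Sum>j\<in>free_coords. (x j - \<theta>s j)\<^sup>2))"
    using kl_ratio_le_gaussian by blast
  show ?thesis
  proof (rule that)
    show "0 < a * cQ + b * cR" using ab cQ(1) cR(1) by (cases "a = 0") (auto intro!: add_pos_nonneg)
    fix x :: "'k \<Rightarrow> real" assume x: "lift_simplex x \<in> prob_simplex"
    define S where "S = (\<Sum>j\<in>free_coords. (x j - \<theta>s j)\<^sup>2)"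
    have "lik_ratio x ^ a * kl_ratio x ^ b \<le> exp (- cQ * S) ^ a * exp (- cR * S) ^ b"
      using cQ(2)[OF x] cR(2)[OF x] unfolding S_def
      by (intro mult_mono power_mono) (auto simp: lik_ratio_nonneg kl_ratio_nonneg)
    also have "\<dots> = exp (- (a * cQ + b * cR) * S)"
      unfolding exp_of_nat_mult[symmetric] exp_add[symmetric] by (simp add: algebra_simps)
    finally show "lik_ratio x ^ a * kl_ratio x ^ b \<le> exp (- (a * cQ + b * cR) * (\<Sum>j\<in>free_coords. (x j - \<theta>s j)\<^sup>2))"
      by (simp add: S_def)
  qed
qed

lemma power_ratios_shift_limit:
  "(\<lambda>n. (lik_ratio (\<lambda>j\<in>free_coords. \<theta>s j + y j / sqrt n) ^ a
           * kl_ratio (\<lambda>j\<in>free_coords. \<theta>s j + y j / sqrt n) ^ b) ^ n)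
     \<longlonglongrightarrow> exp (- quad_form free_coords (\<lambda>i j. real a * formQ i j + real b * formR i j) y / 2)"
proof -
  have "(\<lambda>n. (lik_ratio (\<lambda>j\<in>free_coords. \<theta>s j + y j / sqrt n) ^ n) ^ a
              * (kl_ratio (\<lambda>j\<in>free_coords. \<theta>s j + y j / sqrt n) ^ n) ^ b)
      \<longlonglongrightarrow> exp (- quadQ (lift_tangent y) / 2) ^ a * exp (- quadR (lift_tangent y) / 2) ^ b"
    by (intro tendsto_mult tendsto_power lik_ratio_shift_limit kl_ratio_shift_limit)
  moreover have "exp (- quadQ (lift_tangent y) / 2) ^ a * exp (- quadR (lift_tangent y) / 2) ^ b
      = exp (- quad_form free_coords (\<lambda>i j. real a * formQ i j + real b * formR i j) y / 2)"
    unfolding exp_of_nat_mult[symmetric] exp_add[symmetric]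
    by (simp add: quad_form_add quad_form_cmult quadQ_lift_tangent quadR_lift_tangent algebra_simps)
  moreover have "(u ^ a * v ^ b) ^ n = (u ^ n) ^ a * (v ^ n) ^ b" for u v :: real and n
    by (simp add: power_mult_distrib power_mult[symmetric] mult.commute)
  ultimately show ?thesis by simp
qed

lemma laplace_moment:
  assumes ab: "0 < a + b"
  shows "(\<lambda>n. sqrt n ^ card (free_coords :: 'k set) * moment a b n) \<longlonglongrightarrow> dir_density \<alpha> \<theta>s * gauss_const a b"
proof -
  define F where "F = (\<lambda>i j. real a * formQ i j + real b * formR i j)"
  obtain c where c: "0 < c"
    "\<And>x. lift_simplex x \<in> prob_simplex
       \<Longrightarrow> lik_ratio x ^ a * kl_ratio x ^ b \<le> exp (- c * (\<Sum>j\<in>free_coords. (x j - \<theta>s j)\<^sup>2))"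
    using power_ratios_le_gaussian[OF ab] by blast
  obtain \<delta> W where \<delta>: "0 < \<delta>"
    "\<And>x. (\<Sum>j\<in>free_coords. (x j - \<theta>s j)\<^sup>2) < \<delta> \<Longrightarrow> chart_density \<alpha> x \<le> W"
    using chart_density_bounded_near[where t = \<theta>s and \<alpha> = \<alpha>] ts_simplex ts_pos alpha_pos by blast
  interpret laplace_method free_coords \<theta>s "chart_density \<alpha>" "\<lambda>x. lik_ratio x ^ a * kl_ratio x ^ b"
    "quad_form free_coords F" c \<delta> W "dir_density \<alpha> \<theta>s"
  proof
    show "integrable (PiM free_coords (\<lambda>_. lborel)) (chart_density \<alpha>)"
      using alpha_pos by (rule integrable_chart_density)
    show "0 \<le> chart_density \<alpha> x" for x
      using alpha_pos by (rule chart_density_nonneg)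
    show "lik_ratio x ^ a * kl_ratio x ^ b \<le> exp (- c * (\<Sum>j\<in>free_coords. (x j - \<theta>s j)\<^sup>2))"
      if "chart_density \<alpha> x \<noteq> 0" for x
      using c(2)[OF chart_density_nonzero_simplex[OF that]] .
    show "(\<lambda>n. (lik_ratio (\<lambda>j\<in>free_coords. \<theta>s j + y j / sqrt n) ^ a
                * kl_ratio (\<lambda>j\<in>free_coords. \<theta>s j + y j / sqrt n) ^ b) ^ n
              * chart_density \<alpha> (\<lambda>j\<in>free_coords. \<theta>s j + y j / sqrt n))
          \<longlonglongrightarrow> exp (- quad_form free_coords F y / 2) * dir_density \<alpha> \<theta>s" for y
      unfolding F_def
      by (intro tendsto_mult power_ratios_shift_limit chart_density_shift_limit ts_simplex ts_pos alpha_pos)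
    show "quad_form free_coords F \<in> borel_measurable (PiM free_coords (\<lambda>_. lborel))"
      by (rule measurable_quad_form) simp
    show "(\<lambda>x. lik_ratio x ^ a * kl_ratio x ^ b) \<in> borel_measurable (PiM free_coords (\<lambda>_. lborel))"
      by measurable
    show "chart_density \<alpha> \<in> borel_measurable (PiM free_coords (\<lambda>_. lborel))"
      by measurable
    show "0 \<le> lik_ratio x ^ a * kl_ratio x ^ b" for x
      by (simp add: lik_ratio_nonneg kl_ratio_nonneg)
  qed (use c \<delta> in simp_all)
  have "(\<integral>y. exp (- quad_form free_coords F y / 2) \<partial>PiM free_coords (\<lambda>_. lborel)) = gauss_const a b"
    unfolding F_def gauss_const_def by (rule integral_gaussian_PiM[OF pos_def_combination[OF ab]])
  then show ?thesis
    using laplace_limit by (simp add: moment_def)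
qed

lemma dir_corr_eq_moments:
  assumes "0 < n"
  shows "dir_corr \<alpha> (\<lambda>\<theta>. exp (real n * lda_H \<phi> p \<theta>)) (exp_Hhat (real n) (lda_H \<phi> p \<theta>s) \<theta>s)
    = (moment 1 1 n - moment 1 0 n * moment 0 1 n)
      / sqrt ((moment 2 0 n - (moment 1 0 n)\<^sup>2) * (moment 0 2 n - (moment 0 1 n)\<^sup>2))"
proof -
  define e where "e = exp (real n * lda_H \<phi> p \<theta>s)"
  have e: "0 < e" by (simp add: e_def)
  have X: "exp (real n * lda_H \<phi> p (lift_simplex x)) = e * lik_ratio x ^ n" for x
    by (simp add: e_def lik_ratio_def exp_of_nat_mult[symmetric] exp_add[symmetric] algebra_simps)
  have Y: "exp_Hhat (real n) (lda_H \<phi> p \<theta>s) \<theta>s (lift_simplex x) = e * kl_ratio x ^ n" for x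
    using assms by (simp add: exp_Hhat_def kl_ratio_def e_def exp_of_nat_mult[symmetric] exp_add[symmetric] algebra_simps)
  have E: "dir_expect \<alpha> (\<lambda>\<theta>. (exp (real n * lda_H \<phi> p \<theta>)) ^ a * (exp_Hhat (real n) (lda_H \<phi> p \<theta>s) \<theta>s \<theta>) ^ b)
      = e ^ (a + b) * moment a b n" for a b
  proof -
    have "(e * lik_ratio x ^ n) ^ a * (e * kl_ratio x ^ n) ^ b * chart_density \<alpha> x
        = e ^ (a + b) * ((lik_ratio x ^ a * kl_ratio x ^ b) ^ n * chart_density \<alpha> x)" for x
      by (simp add: power_mult_distrib power_add power_mult[symmetric] mult_ac)
    then show ?thesis
      unfolding dir_expect_eq_chart moment_def X Y by (simp only: integral_mult_right_zero)
  qed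
  have E11: "dir_expect \<alpha> (\<lambda>\<theta>. exp (real n * lda_H \<phi> p \<theta>) * exp_Hhat (real n) (lda_H \<phi> p \<theta>s) \<theta>s \<theta>)
      = e\<^sup>2 * moment 1 1 n"
    using E[of 1 1] by (simp add: power2_eq_square)
  have E10: "dir_expect \<alpha> (\<lambda>\<theta>. exp (real n * lda_H \<phi> p \<theta>)) = e * moment 1 0 n"
    using E[of 1 0] by simp
  have E01: "dir_expect \<alpha> (exp_Hhat (real n) (lda_H \<phi> p \<theta>s) \<theta>s) = e * moment 0 1 n"
    using E[of 0 1] by simp
  have E20: "dir_expect \<alpha> (\<lambda>\<theta>. (exp (real n * lda_H \<phi> p \<theta>))\<^sup>2) = e\<^sup>2 * moment 2 0 n"
    using E[of 2 0] by (simp add: power2_eq_square)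
  have E02: "dir_expect \<alpha> (\<lambda>\<theta>. (exp_Hhat (real n) (lda_H \<phi> p \<theta>s) \<theta>s \<theta>)\<^sup>2) = e\<^sup>2 * moment 0 2 n"
    using E[of 0 2] by (simp add: power2_eq_square)
  have "dir_corr \<alpha> (\<lambda>\<theta>. exp (real n * lda_H \<phi> p \<theta>)) (exp_Hhat (real n) (lda_H \<phi> p \<theta>s) \<theta>s)
      = (e\<^sup>2 * (moment 1 1 n - moment 1 0 n * moment 0 1 n))
        / sqrt ((e\<^sup>2 * (moment 2 0 n - (moment 1 0 n)\<^sup>2)) * (e\<^sup>2 * (moment 0 2 n - (moment 0 1 n)\<^sup>2)))"
    unfolding dir_corr_def E11 E10 E01 E20 E02
    by (simp add: power_mult_distrib right_diff_distrib power2_eq_square mult_ac)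
  then show ?thesis using e by (simp add: divide_sqrt_mult_cancel)
qed

lemma tendsto_dir_corr:
  assumes K2: "2 \<le> CARD('k)"
  shows "(\<lambda>n. dir_corr \<alpha> (\<lambda>\<theta>. exp (real n * lda_H \<phi> p \<theta>)) (exp_Hhat (real n) (lda_H \<phi> p \<theta>s) \<theta>s))
           \<longlonglongrightarrow> gauss_const 1 1 / sqrt (gauss_const 2 0 * gauss_const 0 2)"
proof -
  define s where "s n = sqrt (real n) ^ card (free_coords :: 'k set)" for n :: nat
  define w0 where "w0 = dir_density \<alpha> \<theta>s"
  have "0 < card (free_coords :: 'k set)" using K2 by (simp add: card_free_coords)
  then have s_inverse: "(\<lambda>n. inverse (s n)) \<longlonglongrightarrow> 0"
    unfolding s_def by (rule tendsto_inverse_sqrt_power)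
  have s_pos: "\<forall>\<^sub>F n in sequentially. 0 < s n"
    using eventually_gt_at_top[of "0::nat"] by eventually_elim (simp add: s_def)
  have w0: "0 < w0"
    unfolding w0_def using ts_simplex ts_pos alpha_pos by (rule dir_density_pos)
  have lim: "(\<lambda>n. s n * moment a b n) \<longlonglongrightarrow> w0 * gauss_const a b" if "0 < a + b" for a b
    using laplace_moment[OF that] by (simp add: s_def w0_def)
  have "(\<lambda>n. (moment 1 1 n - moment 1 0 n * moment 0 1 n)
             / sqrt ((moment 2 0 n - (moment 1 0 n)\<^sup>2) * (moment 0 2 n - (moment 0 1 n)\<^sup>2)))
      \<longlonglongrightarrow> (w0 * gauss_const 1 1) / sqrt ((w0 * gauss_const 2 0) * (w0 * gauss_const 0 2))"
    using w0 gauss_const_pos[of 2 0] gauss_const_pos[of 0 2]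
    by (intro tendsto_corr_scaled[OF s_inverse s_pos lim[of 1 1] lim[of 1 0] lim[of 0 1] lim[of 2 0] lim[of 0 2]]) auto
  moreover have "\<forall>\<^sub>F n in sequentially.
      (moment 1 1 n - moment 1 0 n * moment 0 1 n)
        / sqrt ((moment 2 0 n - (moment 1 0 n)\<^sup>2) * (moment 0 2 n - (moment 0 1 n)\<^sup>2))
      = dir_corr \<alpha> (\<lambda>\<theta>. exp (real n * lda_H \<phi> p \<theta>)) (exp_Hhat (real n) (lda_H \<phi> p \<theta>s) \<theta>s)"
    using eventually_gt_at_top[of 0] by eventually_elim (simp add: dir_corr_eq_moments)
  ultimately show ?thesis
    using w0 by (simp add: Lim_transform_eventually divide_sqrt_mult_cancel)
qed

end

theorem corollary2:
  fixes \<phi> :: "'k::finite \<Rightarrow> 'v::finite \<Rightarrow> real"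
    and p :: "'v \<Rightarrow> real"
    and \<theta>s :: "'k \<Rightarrow> real"
    and \<alpha> :: "'k \<Rightarrow> real"
  assumes K2: "CARD('k) \<ge> 2"
    and phi_simplex: "\<And>k. (\<lambda>v. \<phi> k v) \<in> prob_simplex"
    and phi_pos: "\<And>k v. 0 < \<phi> k v"
    and p_simplex: "p \<in> prob_simplex"
    and ts_simplex: "\<theta>s \<in> prob_simplex"
    and ts_pos: "\<And>k. 0 < \<theta>s k"
    and unique_max: "\<And>\<theta>. \<theta> \<in> prob_simplex \<Longrightarrow> \<theta> \<noteq> \<theta>s \<Longrightarrow> lda_H \<phi> p \<theta> < lda_H \<phi> p \<theta>s"
    and neg_def: "\<And>d :: 'k \<Rightarrow> real. (\<exists>k. d k \<noteq> 0) \<Longrightarrow> (\<Sum>k\<in>UNIV. d k) = 0 \<Longrightarrow>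
                    (\<Sum>i\<in>UNIV. \<Sum>j\<in>UNIV. d i * hessian (lda_H \<phi> p) \<theta>s i j * d j) < 0"
    and alpha_pos: "\<And>k. 0 < \<alpha> k"
  shows "(\<lambda>n::nat. (dir_corr \<alpha> (\<lambda>\<theta>. exp (real n * lda_H \<phi> p \<theta>))
                             (exp_Hhat (real n) (lda_H \<phi> p \<theta>s) \<theta>s))\<^sup>2)
         \<longlonglongrightarrow>
         (let Q = (\<chi> i j. hessian (lda_H \<phi> p) \<theta>s i j) :: real^'k^'k;
              R = (\<chi> i j. if i = j then - 1 / \<theta>s i else 0) :: real^'k^'k
          in sqrt \<bar>det Q\<bar> * sqrt \<bar>det R\<bar> / \<bar>det ((1/2) *\<^sub>R (Q + R))\<bar>)"
proof -
  interpret lda_dirichlet \<phi> p \<theta>s \<alpha>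
    using phi_simplex phi_pos p_simplex ts_simplex ts_pos unique_max neg_def alpha_pos
    by unfold_locales
  show ?thesis
    unfolding gauss_const_ratio[symmetric] by (intro tendsto_power tendsto_dir_corr K2)
qed

end
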